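(* For some constant $c>0$, there exists an infinite family $\{B_m\}$ of graphs satisfying: (1) $B_m$ is a base graph with $m$ vertices and $O(m)$ edges; (2) $B_m$ has width $\phi_m=\Theta(\log m)$; (3) $B_m$ has at least $3m$ edges; (4) $B_m$ has girth $\Theta(\log m)$.
   Context: A base graph of width $\phi$ is an unweighted connected graph with two distinguished vertices $s$ (source) and $t$ (sink) whose edge set can be decomposed into edge-disjoint $(s,t)$-paths, each of which is a shortest $(s,t)$-path in the graph and has exactly $\phi$ edges. *)

theory Defs
  imports "HOL-Analysis.Analysis" "HOL-Library.Extended_Nat"
begin

definition simple_graph :: "'a set \<Rightarrow> 'a set set \<Rightarrow> bool" where
  "simple_graph V E \<longleftrightarrow> finite V \<and>
     (\<forall>e\<in>E. \<exists>u v. u \<in> V \<and> v \<in> V \<and> u \<noteq> v \<and> e = {u, v})"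

text \<open>A walk is a nonempty list of vertices with consecutive vertices adjacent;
  its number of edges is length minus one.\<close>

definition is_walk :: "'a set \<Rightarrow> 'a set set \<Rightarrow> 'a list \<Rightarrow> bool" where
  "is_walk V E p \<longleftrightarrow> p \<noteq> [] \<and> set p \<subseteq> V \<and>
     (\<forall>i. Suc i < length p \<longrightarrow> {p ! i, p ! Suc i} \<in> E)"

definition walk_edges :: "'a list \<Rightarrow> 'a set set" where
  "walk_edges p = {{p ! i, p ! Suc i} | i. Suc i < length p}"

definition connected_graph :: "'a set \<Rightarrow> 'a set set \<Rightarrow> bool" where
  "connected_graph V E \<longleftrightarrow> V \<noteq> {} \<and>
     (\<forall>u\<in>V. \<forall>v\<in>V. \<exists>p. is_walk V E p \<and> hd p = u \<and> last p = v)"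

definition graph_dist :: "'a set \<Rightarrow> 'a set set \<Rightarrow> 'a \<Rightarrow> 'a \<Rightarrow> nat" where
  "graph_dist V E u v = (LEAST k. \<exists>p. is_walk V E p \<and> hd p = u \<and> last p = v \<and> length p = Suc k)"

definition is_path :: "'a set \<Rightarrow> 'a set set \<Rightarrow> 'a \<Rightarrow> 'a \<Rightarrow> 'a list \<Rightarrow> bool" where
  "is_path V E s t p \<longleftrightarrow> is_walk V E p \<and> distinct p \<and> hd p = s \<and> last p = t"

definition base_graph :: "'a set \<Rightarrow> 'a set set \<Rightarrow> 'a \<Rightarrow> 'a \<Rightarrow> nat \<Rightarrow> bool" where
  "base_graph V E s t phi \<longleftrightarrow>
     simple_graph V E \<and> connected_graph V E \<and> s \<in> V \<and> t \<in> V \<and>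
     (\<exists>P. (\<forall>p\<in>P. is_path V E s t p \<and> length p = Suc phi \<and> graph_dist V E s t = phi) \<and>
          (\<forall>p\<in>P. \<forall>q\<in>P. p \<noteq> q \<longrightarrow> walk_edges p \<inter> walk_edges q = {}) \<and>
          (\<Union>p\<in>P. walk_edges p) = E)"

definition is_cycle :: "'a set \<Rightarrow> 'a set set \<Rightarrow> 'a list \<Rightarrow> bool" where
  "is_cycle V E c \<longleftrightarrow> length c \<ge> 3 \<and> distinct c \<and> is_walk V E c \<and> {last c, hd c} \<in> E"

text \<open>Girth: length of a shortest cycle (infinity if acyclic).\<close>

definition girth :: "'a set \<Rightarrow> 'a set set \<Rightarrow> enat" where
  "girth V E = (INF c \<in> {c. is_cycle V E c}. enat (length c))"

end

theory Submission
  imports Defs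
begin

(* Fix d = 12 colours and let A be a maximal system of coloured arcs on {..<n} in which every
  colour class is a partial injection and the underlying graph H has girth at least 2h + 1.
  Maximality leaves at most 25^(2h-1) vertices without an outgoing arc of each colour, so most
  vertices start a monochromatic chain with 8h + 1 arcs. Each chain yields an (s,t)-path: h private
  vertices, the chain copied into k = 8h + 2 middle layers, and h private vertices again. Every edge
  joins consecutive levels, so all these paths are shortest, and a middle edge determines its arc,
  hence the colour and the chain, so they are edge-disjoint. A cycle through s, t or a private
  vertex contains two full private segments, and a cycle inside the middle layers projects to a
  closed non-backtracking walk in H; either way it has at least 2h + 1 vertices. Having more paths
  than vertices of H, two paths start their chains at the same vertex and close a cycle of
  length 2h + 2. Counting gives 2^(9h) <= m <= 2^(23h) vertices, width 10h + 3 and at least 3m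
  edges. *)

section \<open>Walks and cycles\<close>

lemma is_walk_rev:
  assumes "is_walk V E p" shows "is_walk V E (rev p)"
proof -
  have "{rev p ! i, rev p ! Suc i} \<in> E" if "Suc i < length p" for i
  proof -
    have "rev p ! i = p ! Suc (length p - Suc (Suc i))" "rev p ! Suc i = p ! (length p - Suc (Suc i))"
      using that by (auto simp: rev_nth Suc_diff_Suc)
    moreover have "{p ! (length p - Suc (Suc i)), p ! Suc (length p - Suc (Suc i))} \<in> E"
      using assms that unfolding is_walk_def by auto
    ultimately show ?thesis by (simp add: insert_commute)
  qed
  then show ?thesis using assms unfolding is_walk_def by auto
qed

lemma is_walk_take: "is_walk V E p \<Longrightarrow> 0 < j \<Longrightarrow> is_walk V E (take j p)"
  unfolding is_walk_def by (auto dest: in_set_takeD)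

lemma is_walk_Cons_Cons:
  "is_walk V E (a # b # r) \<longleftrightarrow> a \<in> V \<and> {a, b} \<in> E \<and> is_walk V E (b # r)"
  unfolding is_walk_def by (auto simp: less_Suc_eq_0_disj)

lemma is_walk_append:
  assumes "is_walk V E p" "is_walk V E q" "last p = hd q"
  shows "is_walk V E (p @ tl q)"
  using assms
proof (induction p rule: induct_list012)
  case 1 then show ?case by (simp add: is_walk_def)
next
  case (2 x) then show ?case
    by (metis append.left_neutral append_Cons is_walk_def last_ConsL list.collapse)
next
  case (3 x y zs)
  then show ?case by (simp add: is_walk_Cons_Cons)
qed

lemma connected_graphI_hub:
  assumes "s \<in> V" and to_hub: "\<And>v. v \<in> V \<Longrightarrow> \<exists>p. is_walk V E p \<and> hd p = v \<and> last p = s"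
  shows "connected_graph V E"
  unfolding connected_graph_def
proof (intro conjI ballI)
  show "V \<noteq> {}" using assms by auto
  fix u v assume "u \<in> V" "v \<in> V"
  then obtain p q where p: "is_walk V E p" "hd p = u" "last p = s"
    and q: "is_walk V E q" "hd q = v" "last q = s"
    using to_hub by meson
  have ne: "p \<noteq> []" "q \<noteq> []" using p q unfolding is_walk_def by auto
  have walk: "is_walk V E (p @ tl (rev q))"
    using is_walk_append[OF p(1) is_walk_rev[OF q(1)]] p(3) q(3) ne by (simp add: hd_rev)
  have "last p = last q" using p(3) q(3) by simp
  then have "last (p @ tl (rev q)) = hd q"
    using ne by (induction q rule: rev_induct) (auto simp: last_rev last_append hd_append)
  then show "\<exists>w. is_walk V E w \<and> hd w = u \<and> last w = v"
    using walk ne p(2) q(2) by (intro exI[of _ "p @ tl (rev q)"]) simp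
qed

lemma is_cycle_edge_mod:
  assumes "is_cycle V E c"
  shows "{c ! (j mod length c), c ! (Suc j mod length c)} \<in> E"
proof -
  let ?L = "length c"
  have L: "3 \<le> ?L" and ne: "c \<noteq> []" using assms unfolding is_cycle_def by auto
  show ?thesis
  proof (cases "Suc (j mod ?L) < ?L")
    case True
    then have "Suc j mod ?L = Suc (j mod ?L)" by (simp add: mod_Suc)
    then show ?thesis using True assms unfolding is_cycle_def is_walk_def by auto
  next
    case False
    moreover have "j mod ?L < ?L" using L by (intro mod_less_divisor) linarith
    ultimately have j: "j mod ?L = ?L - 1" by linarith
    then have "Suc j mod ?L = 0" using L by (simp add: mod_Suc)
    then show ?thesis using j ne assms unfolding is_cycle_def by (simp add: last_conv_nth hd_conv_nth)
  qed
qed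

lemma is_cycleI:
  assumes "3 \<le> length c" "distinct c" "set c \<subseteq> V"
    and edges: "\<And>j. j < length c \<Longrightarrow> {c ! j, c ! (Suc j mod length c)} \<in> E"
  shows "is_cycle V E c"
proof -
  have "{c ! i, c ! Suc i} \<in> E" if "Suc i < length c" for i
    using edges[of i] that by auto
  moreover have "{last c, hd c} \<in> E"
  proof -
    have "c \<noteq> []" "Suc (length c - 1) = length c" using assms(1) by auto
    then show ?thesis using edges[of "length c - 1"] by (simp add: last_conv_nth hd_conv_nth)
  qed
  ultimately show ?thesis using assms unfolding is_cycle_def is_walk_def by auto
qed

lemma is_cycle_two_neighbours:
  assumes "is_cycle V E c" "v \<in> set c"
  obtains u1 u2 where "u1 \<noteq> u2" "u1 \<in> set c" "u2 \<in> set c" "{v, u1} \<in> E" "{v, u2} \<in> E"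
proof -
  let ?L = "length c"
  have L: "3 \<le> ?L" and dc: "distinct c" using assms unfolding is_cycle_def by auto
  obtain j where j: "j < ?L" "c ! j = v" using assms(2) by (metis in_set_conv_nth)
  define j1 where "j1 = (if j = ?L - 1 then 0 else Suc j)"
  define j2 where "j2 = (if j = 0 then ?L - 1 else j - 1)"
  have "Suc j mod ?L = j1" unfolding j1_def using j L by (auto simp: mod_Suc)
  then have "{v, c ! j1} \<in> E" using is_cycle_edge_mod[OF assms(1), of j] j by auto
  moreover have "j2 mod ?L = j2" "Suc j2 mod ?L = j" unfolding j2_def using j L by auto
  then have "{v, c ! j2} \<in> E" using is_cycle_edge_mod[OF assms(1), of j2] j
    by (auto simp: insert_commute)
  moreover have "j1 < ?L" "j2 < ?L" "j1 \<noteq> j2" unfolding j1_def j2_def using j L by auto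
  then have "c ! j1 \<noteq> c ! j2" using dc by (simp add: nth_eq_iff_index_eq)
  ultimately show ?thesis using that \<open>j1 < ?L\<close> \<open>j2 < ?L\<close> by (meson nth_mem)
qed

text \<open>The shortest closed subwalk has distinct vertices, and at least three of them because there
  are no loops and no backtracking.\<close>

lemma closed_walk_contains_cycle:
  fixes w :: "nat \<Rightarrow> 'a"
  assumes no_loops: "\<And>u. {u} \<notin> E" and "0 < L" "w 0 = w L"
    and in_V: "\<And>j. j \<le> L \<Longrightarrow> w j \<in> V"
    and steps: "\<And>j. j < L \<Longrightarrow> {w j, w (Suc j)} \<in> E"
    and no_backtrack: "\<And>j. 0 < j \<Longrightarrow> j < L \<Longrightarrow> w (j - 1) \<noteq> w (Suc j)"
  shows "\<exists>c. is_cycle V E c \<and> length c \<le> L"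
proof -
  define returns where "returns d \<longleftrightarrow> 0 < d \<and> (\<exists>a. a + d \<le> L \<and> w a = w (a + d))" for d
  define d where "d = (LEAST d. returns d)"
  have "returns L" unfolding returns_def using assms by auto
  then have "returns d" "d \<le> L" unfolding d_def by (auto intro: LeastI Least_le)
  then obtain a where a: "a + d \<le> L" "w a = w (a + d)" and "0 < d" unfolding returns_def by auto
  have shortest: "\<not> returns d'" if "d' < d" for d' using that unfolding d_def by (rule not_less_Least)
  define c where "c = map (\<lambda>t. w (a + t)) [0..<d]"
  have "d \<noteq> 1" using steps[of a] a no_loops by auto
  moreover have "d \<noteq> 2" using no_backtrack[of "Suc a"] a by (auto simp: numeral_2_eq_2)
  ultimately have "3 \<le> length c" using \<open>0 < d\<close> unfolding c_def by simp
  moreover have "distinct c"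
  proof -
    have "w (a + t1) \<noteq> w (a + t2)" if "t1 < t2" "t2 < d" for t1 t2
    proof
      assume "w (a + t1) = w (a + t2)"
      then have "returns (t2 - t1)" unfolding returns_def using that a
        by (intro conjI exI[of _ "a + t1"]) auto
      then show False using shortest[of "t2 - t1"] that by auto
    qed
    then show ?thesis unfolding c_def distinct_conv_nth by (auto simp: neq_iff) metis
  qed
  moreover have "set c \<subseteq> V" unfolding c_def using in_V a by auto
  moreover have "{c ! j, c ! (Suc j mod length c)} \<in> E" if "j < length c" for j
  proof (cases "Suc j < d")
    case True
    then show ?thesis using that steps[of "a + j"] a unfolding c_def by auto
  next
    case False
    then have "Suc j = d" using that unfolding c_def by simp
    then show ?thesis using that steps[of "a + j"] a unfolding c_def by auto
  qed
  ultimately have "is_cycle V E c" by (rule is_cycleI)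
  moreover have "length c \<le> L" using a unfolding c_def by simp
  ultimately show ?thesis by blast
qed

lemma girth_attained:
  assumes "is_cycle V E c"
  obtains c0 where "is_cycle V E c0" "girth V E = enat (length c0)"
proof -
  let ?lengths = "(\<lambda>c. enat (length c)) ` {c. is_cycle V E c}"
  have "?lengths \<noteq> {}" using assms by auto
  then have "Inf ?lengths \<in> ?lengths" unfolding Inf_enat_def by (auto intro: LeastI)
  then show ?thesis using that unfolding girth_def by auto
qed

lemma girth_le_cycle_length: "is_cycle V E c \<Longrightarrow> girth V E \<le> enat (length c)"
  unfolding girth_def by (auto intro: INF_lower)

lemma mod_add_neq_self:
  fixes j s L :: nat assumes "0 < s" "s < L" shows "(j + s) mod L \<noteq> j mod L"
proof
  assume "(j + s) mod L = j mod L"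
  then have "L dvd s" using mod_eq_dvd_iff_nat[of j "j + s" L] by simp
  then show False using assms by (simp add: nat_dvd_not_less)
qed

lemma distinct_nth_mod_eq_iff:
  "distinct xs \<Longrightarrow> xs \<noteq> [] \<Longrightarrow>
    xs ! (u mod length xs) = xs ! (v mod length xs) \<longleftrightarrow> u mod length xs = v mod length xs"
  by (simp add: nth_eq_iff_index_eq)

lemma is_cycle_edge_mod_inj:
  assumes c: "is_cycle V E c"
    and eq: "{c ! (i mod length c), c ! (Suc i mod length c)} =
      {c ! (j mod length c), c ! (Suc j mod length c)}"
  shows "i mod length c = j mod length c"
proof -
  let ?L = "length c"
  have L: "3 \<le> ?L" and "distinct c" using c unfolding is_cycle_def by auto
  then have index_eq: "c ! (u mod ?L) = c ! (v mod ?L) \<longleftrightarrow> u mod ?L = v mod ?L" for u v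
    using distinct_nth_mod_eq_iff by fastforce
  show ?thesis
  proof (rule ccontr)
    assume "i mod ?L \<noteq> j mod ?L"
    then have "i mod ?L = Suc j mod ?L" "Suc i mod ?L = j mod ?L"
      using eq index_eq by (metis doubleton_eq_iff)+
    then have "(i + 2) mod ?L = i mod ?L" by (metis add_2_eq_Suc' mod_Suc_eq)
    then show False using mod_add_neq_self[of 2 ?L i] L by simp
  qed
qed

lemma is_walk_around_cycle:
  assumes c: "is_cycle V E' c"
    and other_edges: "\<And>t. t mod length c \<noteq> j mod length c \<Longrightarrow>
      {c ! (t mod length c), c ! (Suc t mod length c)} \<in> E"
  shows "is_walk V E (map (\<lambda>t. c ! ((Suc j + t) mod length c)) [0..<length c])"
  unfolding is_walk_def
proof (intro conjI allI impI)
  let ?L = "length c" and ?w = "map (\<lambda>t. c ! ((Suc j + t) mod length c)) [0..<length c]"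
  have "3 \<le> ?L" "set c \<subseteq> V" using c unfolding is_cycle_def is_walk_def by auto
  moreover have "c ! (u mod ?L) \<in> set c" for u
    using \<open>3 \<le> ?L\<close> by (intro nth_mem mod_less_divisor) linarith
  ultimately show "?w \<noteq> []" "set ?w \<subseteq> V" by auto
  fix t assume t: "Suc t < length ?w"
  then have "(j + Suc t) mod ?L \<noteq> j mod ?L" by (intro mod_add_neq_self) auto
  then show "{?w ! t, ?w ! Suc t} \<in> E" using other_edges[of "Suc j + t"] t by simp
qed

lemma cycle_through_new_edge:
  assumes c: "is_cycle V (insert {x, y} E) c" and not_old: "\<not> is_cycle V E c"
  shows "\<exists>w. is_walk V E w \<and> hd w = x \<and> last w = y \<and> length w = length c"
proof -
  let ?L = "length c"
  define F where "F t = c ! (t mod ?L)" for t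
  have L: "3 \<le> ?L" and "distinct c" and "set c \<subseteq> V"
    using c unfolding is_cycle_def is_walk_def by auto
  have F_eq: "F u = F v \<longleftrightarrow> u mod ?L = v mod ?L" for u v
    unfolding F_def using \<open>distinct c\<close> L distinct_nth_mod_eq_iff by fastforce
  have F_edge: "{F t, F (Suc t)} \<in> insert {x, y} E" for t
    unfolding F_def by (rule is_cycle_edge_mod[OF c])
  obtain j where j: "j < ?L" "{F j, F (Suc j)} \<notin> E"
    using not_old is_cycleI[OF L \<open>distinct c\<close> \<open>set c \<subseteq> V\<close>] unfolding F_def by auto
  have new: "{F j, F (Suc j)} = {x, y}" using j F_edge[of j] by auto
  have "{F t, F (Suc t)} \<in> E" if "t mod ?L \<noteq> j mod ?L" for t
    using that is_cycle_edge_mod_inj[OF c, of t j] F_edge[of t] new unfolding F_def by auto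
  then have walk: "is_walk V E (map (\<lambda>t. F (Suc j + t)) [0..<?L])"
    using is_walk_around_cycle[OF c] unfolding F_def by blast
  define w where "w = map (\<lambda>t. F (Suc j + t)) [0..<?L]"
  have "0 < ?L" using L by linarith
  then have "hd w = F (Suc j)" "length w = ?L" unfolding w_def by (simp_all add: upt_conv_Cons)
  moreover have "last w = F j"
  proof -
    have "last w = F (Suc j + (?L - 1))" unfolding w_def using \<open>0 < ?L\<close> by (simp add: last_map)
    also have "Suc j + (?L - 1) = j + ?L" using \<open>0 < ?L\<close> by simp
    also have "F (j + ?L) = F j" by (intro F_eq[THEN iffD2]) simp
    finally show ?thesis .
  qed
  moreover have "w \<noteq> []" "is_walk V E w" "is_walk V E (rev w)"
    using walk is_walk_rev unfolding w_def is_walk_def by blast+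
  moreover consider "F (Suc j) = x" "F j = y" | "F (Suc j) = y" "F j = x"
    using new by (metis doubleton_eq_iff)
  ultimately show ?thesis by (metis hd_rev last_rev length_rev)
qed

fun graph_ball :: "'a set set \<Rightarrow> 'a \<Rightarrow> nat \<Rightarrow> 'a set" where
  "graph_ball E x 0 = {x}"
| "graph_ball E x (Suc r) = graph_ball E x r \<union> (\<Union>v\<in>graph_ball E x r. {y. {v, y} \<in> E})"

lemma graph_ball_mono: "r \<le> r' \<Longrightarrow> graph_ball E x r \<subseteq> graph_ball E x r'"
  by (induction r') (auto simp: le_Suc_eq)

lemma is_walk_snoc:
  assumes "is_walk V E (xs @ [y])" "xs \<noteq> []"
  shows "is_walk V E xs" "{last xs, y} \<in> E"
proof -
  show "is_walk V E xs" using is_walk_take[OF assms(1), of "length xs"] assms(2) by simp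
  have "length xs - 1 < length xs" "Suc (length xs - 1) = length xs" using assms(2) by auto
  then show "{last xs, y} \<in> E"
    using assms unfolding is_walk_def by (metis nth_append nth_append_length last_conv_nth
        length_append_singleton lessI)
qed

lemma walk_last_in_graph_ball: "is_walk V E p \<Longrightarrow> last p \<in> graph_ball E (hd p) (length p - 1)"
proof (induction p rule: rev_induct)
  case Nil then show ?case by (simp add: is_walk_def)
next
  case (snoc y xs)
  show ?case
  proof (cases "xs = []")
    case True then show ?thesis by simp
  next
    case False
    then have "last xs \<in> graph_ball E (hd xs) (length xs - 1)" "{last xs, y} \<in> E"
      using snoc.IH is_walk_snoc[OF snoc.prems] by auto
    then show ?thesis using False by (cases xs) auto
  qed
qed

lemma graph_ball_finite_card:
  assumes degree: "\<And>v. finite {y. {v, y} \<in> E} \<and> card {y. {v, y} \<in> E} \<le> D"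
  shows "finite (graph_ball E x r) \<and> card (graph_ball E x r) \<le> (D + 1) ^ r"
proof (induction r)
  case 0 then show ?case by simp
next
  case (Suc r)
  let ?B = "graph_ball E x r" and ?N = "\<lambda>v. {y. {v, y} \<in> E}"
  have "card (\<Union>v\<in>?B. ?N v) \<le> (\<Sum>v\<in>?B. card (?N v))"
    using Suc by (intro card_UN_le) auto
  also have "\<dots> \<le> card ?B * D" using sum_mono[of ?B "\<lambda>v. card (?N v)" "\<lambda>_. D"] degree by simp
  finally have "card (graph_ball E x (Suc r)) \<le> card ?B * (D + 1)"
    using card_Un_le[of ?B "\<Union>v\<in>?B. ?N v"] by simp
  also have "\<dots> \<le> (D + 1) ^ r * (D + 1)" using Suc by (intro mult_right_mono) auto
  finally show ?case using Suc degree by (simp add: mult.commute)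
qed

text \<open>A short cycle through the new edge would leave a short walk between its ends.\<close>

lemma cycle_long_after_far_edge:
  assumes long: "\<And>c. is_cycle V E c \<Longrightarrow> g \<le> length c"
    and far: "y \<notin> graph_ball E x (g - 2)" and c: "is_cycle V (insert {x, y} E) c"
  shows "g \<le> length c"
proof (rule ccontr)
  assume short: "\<not> g \<le> length c"
  then have "\<not> is_cycle V E c" using long by auto
  then obtain w where w: "is_walk V E w" "hd w = x" "last w = y" "length w = length c"
    using cycle_through_new_edge[OF c] by blast
  have "y \<in> graph_ball E x (length c - 1)" using walk_last_in_graph_ball[OF w(1)] w by simp
  moreover have "length c - 1 \<le> g - 2" using short by simp
  then have "graph_ball E x (length c - 1) \<subseteq> graph_ball E x (g - 2)" by (rule graph_ball_mono)
  ultimately show False using far by blast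
qed

section \<open>Relabelling the vertices\<close>

definition edge_image :: "('a \<Rightarrow> 'b) \<Rightarrow> 'a set set \<Rightarrow> 'b set set" where
  "edge_image f E = (\<lambda>e. f ` e) ` E"

lemma simple_graph_edges_Pow: "simple_graph V E \<Longrightarrow> E \<subseteq> Pow V"
  unfolding simple_graph_def by auto

lemma is_walk_map:
  assumes "is_walk V E p" shows "is_walk (f ` V) (edge_image f E) (map f p)"
proof -
  have "{map f p ! i, map f p ! Suc i} \<in> edge_image f E" if "Suc i < length p" for i
  proof -
    have "{p ! i, p ! Suc i} \<in> E" using assms that unfolding is_walk_def by auto
    then have "f ` {p ! i, p ! Suc i} \<in> edge_image f E" unfolding edge_image_def by blast
    then show ?thesis using that by simp
  qed
  then show ?thesis using assms unfolding is_walk_def by auto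
qed

lemma is_cycle_map:
  assumes "inj_on f V" "is_cycle V E c" shows "is_cycle (f ` V) (edge_image f E) (map f c)"
proof -
  have c: "3 \<le> length c" "distinct c" "is_walk V E c" "{last c, hd c} \<in> E"
    using assms(2) unfolding is_cycle_def by auto
  then have "set c \<subseteq> V" "c \<noteq> []" unfolding is_walk_def by auto
  show ?thesis unfolding is_cycle_def
  proof (intro conjI)
    show "3 \<le> length (map f c)" using c by simp
    show "distinct (map f c)"
      using c \<open>set c \<subseteq> V\<close> assms(1) by (simp add: distinct_map inj_on_subset)
    show "is_walk (f ` V) (edge_image f E) (map f c)" using c(3) by (rule is_walk_map)
    have "{last (map f c), hd (map f c)} = f ` {last c, hd c}"
      using \<open>c \<noteq> []\<close> by (simp add: last_map hd_map)
    then show "{last (map f c), hd (map f c)} \<in> edge_image f E"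
      using c unfolding edge_image_def by blast
  qed
qed

lemma walk_edges_map: "walk_edges (map f p) = edge_image f (walk_edges p)"
proof -
  have "walk_edges (map f p) = {f ` {p ! i, p ! Suc i} | i. Suc i < length p}"
    unfolding walk_edges_def by force
  also have "\<dots> = (\<lambda>e. f ` e) ` {{p ! i, p ! Suc i} | i. Suc i < length p}" by blast
  finally show ?thesis unfolding walk_edges_def edge_image_def .
qed

lemma edge_image_inv_into:
  assumes "inj_on f V" "E \<subseteq> Pow V"
  shows "edge_image (inv_into V f) (edge_image f E) = E"
proof -
  have "inv_into V f ` f ` e = e" if "e \<in> E" for e
    using assms that by (meson PowD inv_into_image_cancel subsetD)
  then show ?thesis unfolding edge_image_def by (simp add: image_image)
qed

lemma map_inv_into_map:
  assumes "set q \<subseteq> f ` V" shows "map f (map (inv_into V f) q) = q"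
  using assms by (induction q) (auto simp: f_inv_into_f)

lemma is_walk_map_inv:
  assumes "inj_on f V" "E \<subseteq> Pow V" "is_walk (f ` V) (edge_image f E) q"
  obtains p where "q = map f p" "is_walk V E p"
proof
  have "set q \<subseteq> f ` V" using assms(3) unfolding is_walk_def by auto
  then show "q = map f (map (inv_into V f) q)" by (rule map_inv_into_map[symmetric])
  show "is_walk V E (map (inv_into V f) q)"
    using is_walk_map[OF assms(3), of "inv_into V f"] assms by (simp add: edge_image_inv_into)
qed

lemma is_cycle_map_inv:
  assumes "inj_on f V" "E \<subseteq> Pow V" "is_cycle (f ` V) (edge_image f E) q"
  obtains p where "q = map f p" "is_cycle V E p"
proof
  have "set q \<subseteq> f ` V" using assms(3) unfolding is_cycle_def is_walk_def by auto
  then show "q = map f (map (inv_into V f) q)" by (rule map_inv_into_map[symmetric])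
  have "inj_on (inv_into V f) (f ` V)" by (simp add: inj_on_inv_into)
  moreover have "inv_into V f ` f ` V = V" using assms(1) by simp
  ultimately show "is_cycle V E (map (inv_into V f) q)"
    using is_cycle_map[of "inv_into V f" "f ` V", OF _ assms(3)] assms
    by (simp add: edge_image_inv_into)
qed

lemma girth_edge_image:
  assumes "inj_on f V" "E \<subseteq> Pow V"
  shows "girth (f ` V) (edge_image f E) = girth V E"
proof -
  have "(\<lambda>c. enat (length c)) ` {c. is_cycle (f ` V) (edge_image f E) c} =
      (\<lambda>c. enat (length c)) ` {c. is_cycle V E c}"
  proof (intro equalityI subsetI)
    fix l assume "l \<in> (\<lambda>c. enat (length c)) ` {c. is_cycle (f ` V) (edge_image f E) c}"
    then obtain q where q: "is_cycle (f ` V) (edge_image f E) q" "l = enat (length q)" by auto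
    obtain p where "q = map f p" "is_cycle V E p" using is_cycle_map_inv[OF assms q(1)] .
    then show "l \<in> (\<lambda>c. enat (length c)) ` {c. is_cycle V E c}" using q(2) by auto
  next
    fix l assume "l \<in> (\<lambda>c. enat (length c)) ` {c. is_cycle V E c}"
    then obtain p where "is_cycle V E p" "l = enat (length p)" by auto
    then have "is_cycle (f ` V) (edge_image f E) (map f p)" "l = enat (length (map f p))"
      using is_cycle_map[OF assms(1)] by auto
    then show "l \<in> (\<lambda>c. enat (length c)) ` {c. is_cycle (f ` V) (edge_image f E) c}" by blast
  qed
  then show ?thesis unfolding girth_def by simp
qed

lemma graph_dist_edge_image:
  assumes inj: "inj_on f V" and "E \<subseteq> Pow V" "s \<in> V" "t \<in> V"
  shows "graph_dist (f ` V) (edge_image f E) (f s) (f t) = graph_dist V E s t"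
proof -
  have "(\<exists>q. is_walk (f ` V) (edge_image f E) q \<and> hd q = f s \<and> last q = f t \<and> length q = Suc k) \<longleftrightarrow>
        (\<exists>p. is_walk V E p \<and> hd p = s \<and> last p = t \<and> length p = Suc k)" for k
  proof
    assume "\<exists>q. is_walk (f ` V) (edge_image f E) q \<and> hd q = f s \<and> last q = f t \<and> length q = Suc k"
    then obtain q where q: "is_walk (f ` V) (edge_image f E) q" "hd q = f s" "last q = f t"
      "length q = Suc k" by blast
    obtain p where p: "q = map f p" "is_walk V E p" using is_walk_map_inv[OF assms(1,2) q(1)] .
    then have "p \<noteq> []" "hd p \<in> V" "last p \<in> V" unfolding is_walk_def by auto
    moreover have "f (hd p) = f s" "f (last p) = f t"
      using q p \<open>p \<noteq> []\<close> by (auto simp: hd_map last_map)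
    ultimately have "hd p = s" "last p = t" using assms by (auto dest: inj_onD)
    then show "\<exists>p. is_walk V E p \<and> hd p = s \<and> last p = t \<and> length p = Suc k"
      using p q by auto
  next
    assume "\<exists>p. is_walk V E p \<and> hd p = s \<and> last p = t \<and> length p = Suc k"
    then obtain p where p: "is_walk V E p" "hd p = s" "last p = t" "length p = Suc k" by blast
    then have "p \<noteq> []" unfolding is_walk_def by auto
    then show "\<exists>q. is_walk (f ` V) (edge_image f E) q \<and> hd q = f s \<and> last q = f t \<and> length q = Suc k"
      using is_walk_map[OF p(1), of f] p by (intro exI[of _ "map f p"]) (auto simp: hd_map last_map)
  qed
  then show ?thesis unfolding graph_dist_def by simp
qed

lemma card_edge_image:
  assumes "inj_on f V" "E \<subseteq> Pow V" shows "card (edge_image f E) = card E"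
  unfolding edge_image_def using assms by (intro card_image) (meson inj_on_image_Pow inj_on_subset)

lemma simple_graph_edge_image:
  assumes inj: "inj_on f V" and "simple_graph V E"
  shows "simple_graph (f ` V) (edge_image f E)"
  unfolding simple_graph_def
proof (intro conjI ballI)
  show "finite (f ` V)" using assms unfolding simple_graph_def by auto
  fix e assume "e \<in> edge_image f E"
  then obtain u v where "u \<in> V" "v \<in> V" "u \<noteq> v" "e = {f u, f v}"
    using assms unfolding simple_graph_def edge_image_def by auto
  then show "\<exists>u v. u \<in> f ` V \<and> v \<in> f ` V \<and> u \<noteq> v \<and> e = {u, v}"
    using inj by (auto dest: inj_onD)
qed

lemma connected_graph_edge_image:
  assumes "connected_graph V E" shows "connected_graph (f ` V) (edge_image f E)"
  unfolding connected_graph_def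
proof (intro conjI ballI)
  show "f ` V \<noteq> {}" using assms unfolding connected_graph_def by auto
  fix u v assume "u \<in> f ` V" "v \<in> f ` V"
  then obtain u0 v0 p where p: "u = f u0" "v = f v0" "is_walk V E p" "hd p = u0" "last p = v0"
    using assms unfolding connected_graph_def by blast
  moreover have "p \<noteq> []" using p(3) unfolding is_walk_def by auto
  ultimately show "\<exists>q. is_walk (f ` V) (edge_image f E) q \<and> hd q = u \<and> last q = v"
    using is_walk_map by (intro exI[of _ "map f p"]) (auto simp: hd_map last_map)
qed

lemma base_graph_edge_image:
  assumes inj: "inj_on f V" and bg: "base_graph V E s t w"
  shows "base_graph (f ` V) (edge_image f E) (f s) (f t) w"
proof -
  have sg: "simple_graph V E" and "connected_graph V E" "s \<in> V" "t \<in> V"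
    using bg unfolding base_graph_def by auto
  have Pow: "E \<subseteq> Pow V" using sg by (rule simple_graph_edges_Pow)
  obtain P where paths: "\<forall>p\<in>P. is_path V E s t p \<and> length p = Suc w \<and> graph_dist V E s t = w"
    and disjoint: "\<forall>p\<in>P. \<forall>q\<in>P. p \<noteq> q \<longrightarrow> walk_edges p \<inter> walk_edges q = {}"
    and cover: "(\<Union>p\<in>P. walk_edges p) = E"
    using bg unfolding base_graph_def by blast
  have inj_edges: "inj_on (\<lambda>e. f ` e) E" using inj Pow by (meson inj_on_image_Pow inj_on_subset)
  show ?thesis unfolding base_graph_def
  proof (intro conjI exI[of _ "map f ` P"] ballI impI)
    show "simple_graph (f ` V) (edge_image f E)" using inj sg by (rule simple_graph_edge_image)
    show "connected_graph (f ` V) (edge_image f E)"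
      using \<open>connected_graph V E\<close> by (rule connected_graph_edge_image)
    show "f s \<in> f ` V" "f t \<in> f ` V" using \<open>s \<in> V\<close> \<open>t \<in> V\<close> by auto
    fix q assume "q \<in> map f ` P"
    then obtain p where p: "p \<in> P" "q = map f p" by auto
    then have "is_path V E s t p" "length p = Suc w" "graph_dist V E s t = w" using paths by auto
    then have "set p \<subseteq> V" "p \<noteq> []" "distinct p" "is_walk V E p" "hd p = s" "last p = t"
      unfolding is_path_def is_walk_def by auto
    then show "is_path (f ` V) (edge_image f E) (f s) (f t) q"
      using inj is_walk_map unfolding is_path_def p(2)
      by (auto simp: hd_map last_map distinct_map inj_on_subset)
    show "length q = Suc w" "graph_dist (f ` V) (edge_image f E) (f s) (f t) = w"
      using p \<open>length p = Suc w\<close> \<open>graph_dist V E s t = w\<close>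
        graph_dist_edge_image[OF inj Pow \<open>s \<in> V\<close> \<open>t \<in> V\<close>] by auto
  next
    fix p' q' assume "p' \<in> map f ` P" "q' \<in> map f ` P" "p' \<noteq> q'"
    then obtain p q where pq: "p \<in> P" "q \<in> P" "p' = map f p" "q' = map f q" "p \<noteq> q" by auto
    then have "walk_edges p \<subseteq> E" "walk_edges q \<subseteq> E" "walk_edges p \<inter> walk_edges q = {}"
      using cover disjoint by auto
    then show "walk_edges p' \<inter> walk_edges q' = {}"
      using inj_edges unfolding pq walk_edges_map edge_image_def
      by (metis image_empty inj_on_image_Int)
  next
    show "(\<Union>p\<in>map f ` P. walk_edges p) = edge_image f E"
      unfolding cover[symmetric] edge_image_def by (simp add: walk_edges_map edge_image_def image_UN)
  qed
qed

lemma base_graph_relabel_lessThan: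
  assumes bg: "base_graph V E s t w"
  obtains E' s' t' where "base_graph {..<card V} E' s' t' w" "card E' = card E"
    "girth {..<card V} E' = girth V E"
proof -
  have "simple_graph V E" using bg unfolding base_graph_def by auto
  then have "finite V" "E \<subseteq> Pow V" unfolding simple_graph_def by auto
  then obtain f where "bij_betw f V {..<card V}"
    using ex_bij_betw_finite_nat[of V] atLeast0LessThan by auto
  then have inj: "inj_on f V" and onto: "f ` V = {..<card V}" unfolding bij_betw_def by auto
  show ?thesis
    using that[of "edge_image f E" "f s" "f t"] base_graph_edge_image[OF inj bg]
      card_edge_image[OF inj \<open>E \<subseteq> Pow V\<close>] girth_edge_image[OF inj \<open>E \<subseteq> Pow V\<close>]
    unfolding onto by blast
qed

section \<open>Coloured arc systems of large girth\<close>

definition arc_edges :: "(nat \<times> nat \<times> nat) set \<Rightarrow> nat set set" where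
  "arc_edges A = {{x, y} | x y i. (x, y, i) \<in> A}"

definition arc_tails :: "(nat \<times> nat \<times> nat) set \<Rightarrow> nat \<Rightarrow> nat set" where
  "arc_tails A i = {x. \<exists>y. (x, y, i) \<in> A}"

definition arc_heads :: "(nat \<times> nat \<times> nat) set \<Rightarrow> nat \<Rightarrow> nat set" where
  "arc_heads A i = {y. \<exists>x. (x, y, i) \<in> A}"

text \<open>An arc \<open>(x, y, i)\<close> goes from \<open>x\<close> to \<open>y\<close> and has colour \<open>i\<close>.\<close>

locale arc_system =
  fixes n d g :: nat and A :: "(nat \<times> nat \<times> nat) set"
  assumes arcs_subset: "A \<subseteq> {..<n} \<times> {..<n} \<times> {..<d}"
    and arc_not_loop: "(x, y, i) \<in> A \<Longrightarrow> x \<noteq> y"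
    and arc_head_unique: "(x, y, i) \<in> A \<Longrightarrow> (x, y', i) \<in> A \<Longrightarrow> y = y'"
    and arc_tail_unique: "(x, y, i) \<in> A \<Longrightarrow> (x', y, i) \<in> A \<Longrightarrow> x = x'"
    and arc_edge_unique: "(x, y, i) \<in> A \<Longrightarrow> (x', y', i') \<in> A \<Longrightarrow> {x, y} = {x', y'} \<Longrightarrow>
      x = x' \<and> y = y' \<and> i = i'"
    and arc_cycles_long: "is_cycle {..<n} (arc_edges A) c \<Longrightarrow> g \<le> length c"

lemma arc_system_empty: "arc_system n d g {}"
  by unfold_locales (auto simp: is_cycle_def is_walk_def arc_edges_def)

context arc_system
begin

lemma finite_arcs: "finite A"
  using arcs_subset by (rule finite_subset) auto

lemma arc_edgeI: "(x, y, i) \<in> A \<Longrightarrow> {x, y} \<in> arc_edges A"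
  unfolding arc_edges_def by blast

lemma no_loop_edges: "{u} \<notin> arc_edges A"
  unfolding arc_edges_def using arc_not_loop by (auto simp: doubleton_eq_iff)

lemma arc_not_reversed: "(x, y, i) \<in> A \<Longrightarrow> (y, x, i') \<notin> A"
  using arc_edge_unique[of x y i y x i'] arc_not_loop by (auto simp: insert_commute)

lemma arc_edges_degree:
  "finite {y. {v, y} \<in> arc_edges A} \<and> card {y. {v, y} \<in> arc_edges A} \<le> 2 * d"
proof -
  define out where "out i = (THE y. (v, y, i) \<in> A)" for i
  define inc where "inc i = (THE x. (x, v, i) \<in> A)" for i
  have "{y. {v, y} \<in> arc_edges A} \<subseteq> out ` {..<d} \<union> inc ` {..<d}"
  proof
    fix y assume "y \<in> {y. {v, y} \<in> arc_edges A}"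
    then obtain a b i where ab: "{v, y} = {a, b}" "(a, b, i) \<in> A" unfolding arc_edges_def by auto
    then have "i < d" using arcs_subset by auto
    from ab consider "v = a" "y = b" | "v = b" "y = a" by (metis doubleton_eq_iff)
    then show "y \<in> out ` {..<d} \<union> inc ` {..<d}"
    proof cases
      case 1
      then have "out i = y" unfolding out_def using ab arc_head_unique by blast
      then show ?thesis using \<open>i < d\<close> by auto
    next
      case 2
      then have "inc i = y" unfolding inc_def using ab arc_tail_unique by blast
      then show ?thesis using \<open>i < d\<close> by auto
    qed
  qed
  moreover have "card (out ` {..<d} \<union> inc ` {..<d}) \<le> 2 * d"
    using card_Un_le[of "out ` {..<d}" "inc ` {..<d}"]
      card_image_le[of "{..<d}" out] card_image_le[of "{..<d}" inc] by simp
  ultimately show ?thesis by (meson card_mono finite_Un finite_imageI finite_lessThan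
        finite_subset order_trans)
qed

lemma graph_ball_card:
  "finite (graph_ball (arc_edges A) x r) \<and> card (graph_ball (arc_edges A) x r) \<le> (2 * d + 1) ^ r"
  by (rule graph_ball_finite_card[OF arc_edges_degree])

lemma card_arc_tails_eq_heads: "card (arc_tails A i) = card (arc_heads A i)"
proof -
  define Ai where "Ai = {(x, y). (x, y, i) \<in> A}"
  have "inj_on fst Ai" "inj_on snd Ai"
    unfolding Ai_def inj_on_def using arc_head_unique arc_tail_unique by auto
  moreover have "fst ` Ai = arc_tails A i" "snd ` Ai = arc_heads A i"
    unfolding Ai_def arc_tails_def arc_heads_def by force+
  ultimately show ?thesis by (metis card_image)
qed

lemma arc_system_insert:
  assumes "3 \<le> g" "x < n" "y < n" "i < d"
    and x: "x \<notin> arc_tails A i" and y: "y \<notin> arc_heads A i"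
    and far: "y \<notin> graph_ball (arc_edges A) x (g - 2)"
  shows "arc_system n d g (insert (x, y, i) A)"
proof -
  have "x \<in> graph_ball (arc_edges A) x (g - 2)" using graph_ball_mono[of 0 "g - 2"] by auto
  then have "x \<noteq> y" using far by auto
  have "graph_ball (arc_edges A) x 1 \<subseteq> graph_ball (arc_edges A) x (g - 2)"
    using \<open>3 \<le> g\<close> by (intro graph_ball_mono) simp
  then have not_edge: "{x, y} \<notin> arc_edges A" using far by auto
  have edges: "arc_edges (insert (x, y, i) A) = insert {x, y} (arc_edges A)"
    unfolding arc_edges_def by blast
  let ?A' = "insert (x, y, i) A"
  show ?thesis
  proof unfold_locales
    show "?A' \<subseteq> {..<n} \<times> {..<n} \<times> {..<d}" using assms arcs_subset by auto
    show "a \<noteq> b" if "(a, b, j) \<in> ?A'" for a b j using that \<open>x \<noteq> y\<close> arc_not_loop by auto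
    show "b = b'" if "(a, b, j) \<in> ?A'" "(a, b', j) \<in> ?A'" for a b b' j
      using that x arc_head_unique unfolding arc_tails_def by auto
    show "a = a'" if "(a, b, j) \<in> ?A'" "(a', b, j) \<in> ?A'" for a a' b j
      using that y arc_tail_unique unfolding arc_heads_def by auto
    show "a = a' \<and> b = b' \<and> j = j'"
      if ab: "(a, b, j) \<in> ?A'" and ab': "(a', b', j') \<in> ?A'" and eq: "{a, b} = {a', b'}"
      for a b j a' b' j'
    proof (cases "(a, b, j) \<in> A \<and> (a', b', j') \<in> A")
      case True then show ?thesis using eq arc_edge_unique[of a b j a' b' j'] by simp
    next
      case False
      then have "(a, b, j) = (x, y, i) \<and> (a', b', j') = (x, y, i)"
        using ab ab' eq not_edge arc_edgeI[of a' b' j'] arc_edgeI[of a b j] by auto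
      then show ?thesis by simp
    qed
    show "g \<le> length c" if "is_cycle {..<n} (arc_edges ?A') c" for c
      using cycle_long_after_far_edge[OF arc_cycles_long far] that unfolding edges by blast
  qed
qed

end

text \<open>If many vertices lack an outgoing arc of colour \<open>i\<close>, equally many lack an incoming one, and
  at most \<open>(2 d + 1) ^ (g - 2)\<close> of these lie near a given vertex, so one more arc fits.\<close>

lemma maximal_arc_system:
  assumes "3 \<le> g"
  shows "\<exists>A. arc_system n d g A \<and> (\<forall>i<d. card ({..<n} - arc_tails A i) \<le> (2 * d + 1) ^ (g - 2))"
proof -
  let ?X = "{..<n} :: nat set" and ?bound = "(2 * d + 1) ^ (g - 2)"
  have "card A \<le> card (?X \<times> ?X \<times> {..<d})" if "arc_system n d g A" for A
    using arc_system.arcs_subset[OF that] by (intro card_mono) auto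
  then obtain A where A: "arc_system n d g A"
    and maximal: "\<And>A'. arc_system n d g A' \<Longrightarrow> card A' \<le> card A"
    using ex_has_greatest_nat[of "arc_system n d g" "{}" card "Suc (card (?X \<times> ?X \<times> {..<d}))"]
      arc_system_empty by (metis less_Suc_eq_le)
  interpret arc_system n d g A by (rule A)
  have "card (?X - arc_tails A i) \<le> ?bound" if "i < d" for i
  proof (rule ccontr)
    assume many: "\<not> card (?X - arc_tails A i) \<le> ?bound"
    then obtain x where x: "x \<in> ?X" "x \<notin> arc_tails A i" by (metis Diff_iff card.empty equals0I zero_le)
    have "arc_tails A i \<subseteq> ?X" "arc_heads A i \<subseteq> ?X"
      using arcs_subset unfolding arc_tails_def arc_heads_def by auto
    then have "card (?X - arc_heads A i) = card (?X - arc_tails A i)"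
      using card_arc_tails_eq_heads by (simp add: card_Diff_subset finite_subset)
    then have "\<not> ?X - arc_heads A i \<subseteq> graph_ball (arc_edges A) x (g - 2)"
      using many graph_ball_card by (metis card_mono le_trans)
    then obtain y where y: "y \<in> ?X" "y \<notin> arc_heads A i" "y \<notin> graph_ball (arc_edges A) x (g - 2)"
      by blast
    have "arc_system n d g (insert (x, y, i) A)"
      using arc_system_insert assms x y \<open>i < d\<close> by simp
    moreover have "(x, y, i) \<notin> A" using x unfolding arc_tails_def by auto
    ultimately show False using maximal[of "insert (x, y, i) A"] finite_arcs by simp
  qed
  then show ?thesis using A by blast
qed

section \<open>Monochromatic chains\<close>

definition arc_succ :: "(nat \<times> nat \<times> nat) set \<Rightarrow> nat \<Rightarrow> nat \<Rightarrow> nat" where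
  "arc_succ A i x = (THE y. (x, y, i) \<in> A)"

definition chain_starts :: "nat \<Rightarrow> (nat \<times> nat \<times> nat) set \<Rightarrow> nat \<Rightarrow> nat \<Rightarrow> nat set" where
  "chain_starts n A i K =
    {x \<in> {..<n}. \<forall>r<K. ((arc_succ A i ^^ r) x, (arc_succ A i ^^ Suc r) x, i) \<in> A}"

context arc_system
begin

lemma arc_succ_arc: "x \<in> arc_tails A i \<Longrightarrow> (x, arc_succ A i x, i) \<in> A"
  unfolding arc_tails_def arc_succ_def using arc_head_unique by (auto intro: theI)

lemma chain_starts_inj:
  assumes "x \<in> chain_starts n A i K" "x' \<in> chain_starts n A i K"
  shows "r \<le> K \<Longrightarrow> (arc_succ A i ^^ r) x = (arc_succ A i ^^ r) x' \<Longrightarrow> x = x'"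
proof (induction r)
  case 0 then show ?case by simp
next
  case (Suc r)
  have "((arc_succ A i ^^ r) x, (arc_succ A i ^^ Suc r) x, i) \<in> A"
    "((arc_succ A i ^^ r) x', (arc_succ A i ^^ Suc r) x', i) \<in> A"
    using assms Suc.prems(1) unfolding chain_starts_def by auto
  then have "(arc_succ A i ^^ r) x = (arc_succ A i ^^ r) x'" using Suc.prems(2) arc_tail_unique by metis
  then show ?case using Suc by simp
qed

lemma chain_in_range:
  assumes "x \<in> chain_starts n A i K" "r \<le> K" shows "(arc_succ A i ^^ r) x < n"
proof (cases r)
  case 0 then show ?thesis using assms unfolding chain_starts_def by auto
next
  case (Suc r')
  then have "((arc_succ A i ^^ r') x, (arc_succ A i ^^ r) x, i) \<in> A"
    using assms unfolding chain_starts_def by auto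
  then show ?thesis using arcs_subset by auto
qed

text \<open>A vertex whose colour-\<open>i\<close> chain has length \<open>K\<close> but cannot be extended is sent by the
  \<open>K\<close>-th iterate of the successor, injectively, to a vertex without an outgoing arc.\<close>

lemma card_not_chain_starts:
  assumes few_ends: "card ({..<n} - arc_tails A i) \<le> \<beta>"
  shows "card ({..<n} - chain_starts n A i K) \<le> K * \<beta>"
proof (induction K)
  case 0
  have "chain_starts n A i 0 = {..<n}" unfolding chain_starts_def by auto
  then show ?case by simp
next
  case (Suc K)
  let ?X = "{..<n} :: nat set" and ?f = "arc_succ A i ^^ K"
  define ends where "ends = {x \<in> chain_starts n A i K. ?f x \<notin> arc_tails A i}"
  have sub: "?X - chain_starts n A i (Suc K) \<subseteq> (?X - chain_starts n A i K) \<union> ends"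
  proof
    fix x assume x: "x \<in> ?X - chain_starts n A i (Suc K)"
    show "x \<in> (?X - chain_starts n A i K) \<union> ends"
    proof (rule ccontr)
      assume "x \<notin> (?X - chain_starts n A i K) \<union> ends"
      then have "x \<in> chain_starts n A i K" "(?f x, arc_succ A i (?f x), i) \<in> A"
        using x arc_succ_arc unfolding ends_def by auto
      then have "x \<in> chain_starts n A i (Suc K)" unfolding chain_starts_def by (auto simp: less_Suc_eq)
      then show False using x by simp
    qed
  qed
  have "card (?X - chain_starts n A i (Suc K)) \<le> card ((?X - chain_starts n A i K) \<union> ends)"
    by (rule card_mono[OF _ sub]) (auto simp: ends_def chain_starts_def)
  also have "\<dots> \<le> card (?X - chain_starts n A i K) + card ends" by (rule card_Un_le)
  finally have "card (?X - chain_starts n A i (Suc K)) \<le> card (?X - chain_starts n A i K) + card ends" .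
  moreover have "card ends \<le> card (?X - arc_tails A i)"
  proof -
    have "inj_on ?f ends"
      unfolding ends_def using chain_starts_inj[of _ i K _ K] by (auto simp: inj_on_def)
    moreover have "?f ` ends \<subseteq> ?X - arc_tails A i" unfolding ends_def using chain_in_range by auto
    ultimately show ?thesis by (metis card_image card_mono finite_Diff finite_lessThan)
  qed
  ultimately show ?case using Suc few_ends by simp
qed

end

section \<open>The layered graph\<close>

text \<open>Each path has private vertices on its first and last \<open>h\<close> levels; on the \<open>k\<close> middle levels
  it walks along a monochromatic chain, and \<open>Middle x r\<close> is the copy of \<open>x\<close> on middle level \<open>r\<close>,
  shared by all paths whose chains pass through \<open>x\<close> at step \<open>r - 1\<close>.\<close>

datatype vertex = Source | Sink | Lower "nat \<times> nat" nat | Upper "nat \<times> nat" nat | Middle nat nat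

fun middle_label :: "vertex \<Rightarrow> nat" where
  "middle_label (Middle x r) = x"
| "middle_label _ = 0"

locale layered_graph = arc_system n d "2 * h + 1" A for n d h A +
  fixes k :: nat
  assumes h_pos: "1 \<le> h" and k_pos: "1 \<le> k"
begin

definition path_index :: "(nat \<times> nat) set" where
  "path_index = {(i, x). i < d \<and> x \<in> chain_starts n A i (k - 1)}"

definition chain_vertex :: "nat \<times> nat \<Rightarrow> nat \<Rightarrow> nat" where
  "chain_vertex a r = (arc_succ A (fst a) ^^ r) (snd a)"

definition width :: nat where "width = 2 * h + k + 1"

definition path_vertex :: "nat \<times> nat \<Rightarrow> nat \<Rightarrow> vertex" where
  "path_vertex a j = (if j = 0 then Source else if j \<le> h then Lower a j
     else if j \<le> h + k then Middle (chain_vertex a (j - h - 1)) (j - h)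
     else if j \<le> 2 * h + k then Upper a (j - h - k) else Sink)"

definition st_path :: "nat \<times> nat \<Rightarrow> vertex list" where
  "st_path a = map (path_vertex a) [0..<Suc width]"

definition verts :: "vertex set" where
  "verts = {path_vertex a j | a j. a \<in> path_index \<and> j \<le> width}"

definition edges :: "vertex set set" where
  "edges = {{path_vertex a j, path_vertex a (Suc j)} | a j. a \<in> path_index \<and> j < width}"

definition level :: "vertex \<Rightarrow> nat" where
  "level v = (case v of Source \<Rightarrow> 0 | Lower a j \<Rightarrow> j | Middle x r \<Rightarrow> h + r
     | Upper a j \<Rightarrow> h + k + j | Sink \<Rightarrow> width)"

lemma path_vertex_0 [simp]: "path_vertex a 0 = Source"
  and path_vertex_width [simp]: "path_vertex a width = Sink"
  unfolding path_vertex_def width_def by auto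

lemma path_vertex_lower: "1 \<le> j \<Longrightarrow> j \<le> h \<Longrightarrow> path_vertex a j = Lower a j"
  unfolding path_vertex_def by simp

lemma path_vertex_middle:
  "h < j \<Longrightarrow> j \<le> h + k \<Longrightarrow> path_vertex a j = Middle (chain_vertex a (j - h - 1)) (j - h)"
  unfolding path_vertex_def by simp

lemma path_vertex_upper: "h + k < j \<Longrightarrow> j \<le> 2 * h + k \<Longrightarrow> path_vertex a j = Upper a (j - h - k)"
  unfolding path_vertex_def by simp

lemma level_path_vertex [simp]: "j \<le> width \<Longrightarrow> level (path_vertex a j) = j"
  unfolding level_def path_vertex_def width_def by auto

lemma path_vertex_eq_imp_level_eq:
  "path_vertex a j = path_vertex b l \<Longrightarrow> j \<le> width \<Longrightarrow> l \<le> width \<Longrightarrow> j = l"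
  by (metis level_path_vertex)

lemma inj_on_path_vertex: "inj_on (path_vertex a) {..width}"
  using path_vertex_eq_imp_level_eq by (auto simp: inj_on_def)

lemma verts_iff: "v \<in> verts \<longleftrightarrow> (\<exists>a j. a \<in> path_index \<and> j \<le> width \<and> v = path_vertex a j)"
  unfolding verts_def by blast

lemma edges_iff:
  "e \<in> edges \<longleftrightarrow> (\<exists>a j. a \<in> path_index \<and> j < width \<and> e = {path_vertex a j, path_vertex a (Suc j)})"
  unfolding edges_def by blast

lemma path_vertex_in_verts: "a \<in> path_index \<Longrightarrow> j \<le> width \<Longrightarrow> path_vertex a j \<in> verts"
  unfolding verts_def by blast

lemma path_edge_in_edges:
  "a \<in> path_index \<Longrightarrow> j < width \<Longrightarrow> {path_vertex a j, path_vertex a (Suc j)} \<in> edges"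
  unfolding edges_def by blast

lemma finite_path_index: "finite path_index"
proof -
  have "path_index \<subseteq> {..<d} \<times> {..<n}" unfolding path_index_def chain_starts_def by auto
  then show ?thesis by (rule finite_subset) auto
qed

lemma chain_vertex_0: "chain_vertex a 0 = snd a"
  unfolding chain_vertex_def by simp

lemma chain_arc: "a \<in> path_index \<Longrightarrow> r < k - 1 \<Longrightarrow> (chain_vertex a r, chain_vertex a (Suc r), fst a) \<in> A"
  unfolding path_index_def chain_starts_def chain_vertex_def by auto

lemma chain_vertex_less: "a \<in> path_index \<Longrightarrow> r \<le> k - 1 \<Longrightarrow> chain_vertex a r < n"
  unfolding chain_vertex_def path_index_def using chain_in_range by auto

lemma chain_vertex_inj:
  assumes "a \<in> path_index" "b \<in> path_index" "fst a = fst b" "r \<le> k - 1"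
    and "chain_vertex a r = chain_vertex b r"
  shows "a = b"
  using assms chain_starts_inj[of "snd a" "fst a" "k - 1" "snd b" r]
  unfolding path_index_def chain_vertex_def by (auto simp: prod_eq_iff)

lemma length_st_path [simp]: "length (st_path a) = Suc width"
  unfolding st_path_def by simp

lemma st_path_not_Nil [simp]: "st_path a \<noteq> []"
  unfolding st_path_def by simp

lemma nth_st_path [simp]: "j \<le> width \<Longrightarrow> st_path a ! j = path_vertex a j"
  unfolding st_path_def by (simp del: upt_Suc)

lemma hd_st_path: "hd (st_path a) = Source"
  unfolding st_path_def by (simp add: hd_map del: upt_Suc)

lemma last_st_path: "last (st_path a) = Sink"
  unfolding st_path_def by (simp add: last_map del: upt_Suc)

lemma distinct_st_path: "distinct (st_path a)"
proof -
  have "inj_on (path_vertex a) {0..<Suc width}"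
    by (rule inj_on_subset[OF inj_on_path_vertex]) auto
  then show ?thesis unfolding st_path_def by (simp add: distinct_map del: upt_Suc)
qed

lemma is_walk_st_path: "a \<in> path_index \<Longrightarrow> is_walk verts edges (st_path a)"
  unfolding is_walk_def
  by (auto simp: in_set_conv_nth path_vertex_in_verts path_edge_in_edges)

lemma walk_edges_st_path:
  "walk_edges (st_path a) = (\<lambda>j. {path_vertex a j, path_vertex a (Suc j)}) ` {..<width}"
proof -
  have "{st_path a ! j, st_path a ! Suc j} = {path_vertex a j, path_vertex a (Suc j)}"
    if "j < width" for j
    using that by simp
  then show ?thesis unfolding walk_edges_def by force
qed

lemma edges_eq_UN_walk_edges: "edges = (\<Union>a\<in>path_index. walk_edges (st_path a))"
  unfolding walk_edges_st_path edges_def by blast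

lemma card_walk_edges_st_path: "card (walk_edges (st_path a)) = width"
proof -
  have "inj_on (\<lambda>j. {path_vertex a j, path_vertex a (Suc j)}) {..<width}"
  proof (rule inj_onI)
    fix j l assume "j \<in> {..<width}" "l \<in> {..<width}"
      and "{path_vertex a j, path_vertex a (Suc j)} = {path_vertex a l, path_vertex a (Suc l)}"
    then consider "path_vertex a j = path_vertex a l"
      | "path_vertex a j = path_vertex a (Suc l)" "path_vertex a (Suc j) = path_vertex a l"
      by (auto simp: doubleton_eq_iff)
    then show "j = l" using \<open>j \<in> {..<width}\<close> \<open>l \<in> {..<width}\<close>
      by cases (fastforce dest: path_vertex_eq_imp_level_eq)+

  qed
  then show ?thesis unfolding walk_edges_st_path by (simp add: card_image)
qed

lemma edge_level_step:
  assumes "{u, v} \<in> edges" shows "level v \<le> Suc (level u)"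
proof -
  obtain a j where "j < width" "{u, v} = {path_vertex a j, path_vertex a (Suc j)}"
    using assms unfolding edges_iff by blast
  then show ?thesis by (auto simp: doubleton_eq_iff)
qed

lemma walk_level_bound: "is_walk verts edges p \<Longrightarrow> level (last p) \<le> level (hd p) + (length p - 1)"
proof (induction p rule: induct_list012)
  case 1 then show ?case by (simp add: is_walk_def)
next
  case (2 x) then show ?case by simp
next
  case (3 x y zs)
  then have "{x, y} \<in> edges" "level (last (y # zs)) \<le> level y + length zs"
    by (auto simp: is_walk_Cons_Cons)
  then show ?case using edge_level_step[of x y] by simp
qed

lemma graph_dist_Source_Sink:
  assumes "a \<in> path_index" shows "graph_dist verts edges Source Sink = width"
  unfolding graph_dist_def
proof (rule Least_equality)
  show "\<exists>p. is_walk verts edges p \<and> hd p = Source \<and> last p = Sink \<and> length p = Suc width"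
    using is_walk_st_path[OF assms] hd_st_path last_st_path length_st_path by blast
  fix l assume "\<exists>p. is_walk verts edges p \<and> hd p = Source \<and> last p = Sink \<and> length p = Suc l"
  then show "width \<le> l" using walk_level_bound by (force simp: level_def)
qed

lemma simple_graph_layered: "simple_graph verts edges"
  unfolding simple_graph_def
proof (intro conjI ballI)
  have "verts = (\<lambda>(a, j). path_vertex a j) ` (path_index \<times> {..width})" unfolding verts_def by auto
  then show "finite verts" using finite_path_index by simp
  fix e assume "e \<in> edges"
  then obtain a j where "a \<in> path_index" "j < width" "e = {path_vertex a j, path_vertex a (Suc j)}"
    unfolding edges_iff by blast
  moreover have "path_vertex a j \<noteq> path_vertex a (Suc j)"
    using \<open>j < width\<close> path_vertex_eq_imp_level_eq by fastforce
  ultimately show "\<exists>u v. u \<in> verts \<and> v \<in> verts \<and> u \<noteq> v \<and> e = {u, v}"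
    unfolding verts_iff by (metis Suc_leI less_imp_le_nat)
qed

lemma connected_layered:
  assumes "a0 \<in> path_index" shows "connected_graph verts edges"
proof (rule connected_graphI_hub)
  show "Source \<in> verts" using assms unfolding verts_iff by (metis path_vertex_0 zero_le)
  fix v assume "v \<in> verts"
  then obtain a j where a: "a \<in> path_index" "j \<le> width" "v = path_vertex a j"
    unfolding verts_iff by blast
  let ?p = "take (Suc j) (st_path a)"
  have "is_walk verts edges ?p" using is_walk_take[OF is_walk_st_path[OF a(1)]] by simp
  moreover have "?p \<noteq> []" "hd ?p = Source" using hd_st_path by simp_all
  moreover have "last ?p = v" using a \<open>?p \<noteq> []\<close> by (simp add: last_conv_nth)
  ultimately show "\<exists>p. is_walk verts edges p \<and> hd p = v \<and> last p = Source"
    using is_walk_rev by (intro exI[of _ "rev ?p"]) (auto simp: hd_rev last_rev)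
qed

definition private_level :: "nat \<Rightarrow> bool" where
  "private_level j \<longleftrightarrow> (1 \<le> j \<and> j \<le> h) \<or> (h + k < j \<and> j \<le> 2 * h + k)"

lemma private_level_determines_path:
  "private_level j \<Longrightarrow> path_vertex a j = path_vertex b j \<Longrightarrow> a = b"
  unfolding private_level_def path_vertex_def by (auto split: if_splits)

lemma path_vertex_middle_arc:
  assumes "a \<in> path_index" "h < j" "Suc j \<le> h + k"
  shows "(middle_label (path_vertex a j), middle_label (path_vertex a (Suc j)), fst a) \<in> A"
proof -
  have "j - h - 1 < k - 1" "Suc j - h - 1 = Suc (j - h - 1)" using assms(2,3) by auto
  then show ?thesis using chain_arc[OF assms(1)] assms(2,3) by (simp add: path_vertex_middle)
qed

lemma edge_determines_path:
  assumes a: "a \<in> path_index" and b: "b \<in> path_index" and "j < width"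
    and same: "path_vertex a j = path_vertex b j" "path_vertex a (Suc j) = path_vertex b (Suc j)"
  shows "a = b"
proof -
  have "private_level j \<or> private_level (Suc j) \<or> (h < j \<and> Suc j \<le> h + k)"
    using h_pos \<open>j < width\<close> unfolding private_level_def width_def by linarith
  moreover have "a = b" if middle: "h < j" "Suc j \<le> h + k"
  proof -
    have "fst a = fst b"
      using path_vertex_middle_arc[OF a middle] path_vertex_middle_arc[OF b middle] same
        arc_edge_unique by force
    moreover have "chain_vertex a (j - h - 1) = chain_vertex b (j - h - 1)"
      using same(1) middle by (simp add: path_vertex_middle)
    moreover have "j - h - 1 \<le> k - 1" using middle by simp
    ultimately show ?thesis using chain_vertex_inj[OF a b] by blast
  qed
  ultimately show ?thesis using private_level_determines_path same by blast
qed

lemma st_paths_edge_disjoint: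
  assumes a: "a \<in> path_index" and b: "b \<in> path_index" and "a \<noteq> b"
  shows "walk_edges (st_path a) \<inter> walk_edges (st_path b) = {}"
proof (rule ccontr)
  assume "walk_edges (st_path a) \<inter> walk_edges (st_path b) \<noteq> {}"
  then obtain j l where jl: "j < width" "l < width"
    and eq: "{path_vertex a j, path_vertex a (Suc j)} = {path_vertex b l, path_vertex b (Suc l)}"
    unfolding walk_edges_st_path by blast
  then consider "path_vertex a j = path_vertex b l" "path_vertex a (Suc j) = path_vertex b (Suc l)"
    | "path_vertex a j = path_vertex b (Suc l)" "path_vertex a (Suc j) = path_vertex b l"
    by (auto simp: doubleton_eq_iff)
  then show False
  proof cases
    case 1
    then have "j = l" using jl path_vertex_eq_imp_level_eq by simp
    then show False using edge_determines_path[OF a b jl(1)] 1 \<open>a \<noteq> b\<close> by simp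
  next
    case 2
    then have "j = Suc l" "Suc j = l" using jl path_vertex_eq_imp_level_eq by simp_all
    then show False by simp
  qed
qed

lemma base_graph_layered:
  assumes "a0 \<in> path_index" shows "base_graph verts edges Source Sink width"
  unfolding base_graph_def
proof (intro conjI exI[of _ "st_path ` path_index"])
  show "simple_graph verts edges" by (rule simple_graph_layered)
  show "connected_graph verts edges" using assms by (rule connected_layered)
  show "Source \<in> verts" "Sink \<in> verts"
    using path_vertex_in_verts[OF assms, of 0] path_vertex_in_verts[OF assms, of width] by simp_all
  show "\<forall>p\<in>st_path ` path_index. is_path verts edges Source Sink p \<and> length p = Suc width \<and>
      graph_dist verts edges Source Sink = width"
    using is_walk_st_path distinct_st_path hd_st_path last_st_path graph_dist_Source_Sink[OF assms]
    unfolding is_path_def by auto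
  show "\<forall>p\<in>st_path ` path_index. \<forall>q\<in>st_path ` path_index. p \<noteq> q \<longrightarrow>
      walk_edges p \<inter> walk_edges q = {}"
    using st_paths_edge_disjoint by blast
  show "(\<Union>p\<in>st_path ` path_index. walk_edges p) = edges" unfolding edges_eq_UN_walk_edges by simp
qed

lemma card_edges: "card edges = card path_index * width"
proof -
  have "card edges = (\<Sum>a\<in>path_index. card (walk_edges (st_path a)))"
    unfolding edges_eq_UN_walk_edges using finite_path_index st_paths_edge_disjoint
    by (intro card_UN_disjoint) (auto simp: walk_edges_st_path)
  then show ?thesis by (simp add: card_walk_edges_st_path)
qed

lemma edge_ends:
  assumes "{u, v} \<in> edges"
  obtains b l where "b \<in> path_index" "l < width" "u = path_vertex b l" "v = path_vertex b (Suc l)"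
  | b l where "b \<in> path_index" "l < width" "u = path_vertex b (Suc l)" "v = path_vertex b l"
  using assms unfolding edges_iff by (auto simp: doubleton_eq_iff)

lemma private_vertex_neighbour:
  assumes "private_level j" "j < width" "{path_vertex a j, u} \<in> edges"
  shows "u = path_vertex a (j - 1) \<or> u = path_vertex a (Suc j)"
  using assms(3)
proof (cases rule: edge_ends)
  case (1 b l)
  then have "j = l" using assms(2) path_vertex_eq_imp_level_eq by simp
  then have "a = b" using 1 private_level_determines_path[OF assms(1)] by metis
  then show ?thesis using 1 \<open>j = l\<close> by simp
next
  case (2 b l)
  then have "j = Suc l" using assms(2) path_vertex_eq_imp_level_eq by simp
  then have "a = b" using 2 private_level_determines_path[OF assms(1)] by metis
  then show ?thesis using 2 \<open>j = Suc l\<close> by simp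
qed

lemma private_level_less_width: "private_level j \<Longrightarrow> 1 \<le> j \<and> j < width"
  unfolding private_level_def width_def by auto

lemma cycle_private_step:
  assumes c: "is_cycle verts edges c" and "private_level j" and "path_vertex a j \<in> set c"
  shows "path_vertex a (j - 1) \<in> set c" "path_vertex a (Suc j) \<in> set c"
proof -
  obtain u1 u2 where "u1 \<noteq> u2" "u1 \<in> set c" "u2 \<in> set c"
    "{path_vertex a j, u1} \<in> edges" "{path_vertex a j, u2} \<in> edges"
    using is_cycle_two_neighbours[OF c assms(3)] by blast
  with private_vertex_neighbour[OF assms(2)] private_level_less_width[OF assms(2)]
  show "path_vertex a (j - 1) \<in> set c" "path_vertex a (Suc j) \<in> set c" by metis+
qed

lemma cycle_private_run_up:
  assumes c: "is_cycle verts edges c" and run: "\<And>l. j \<le> l \<Longrightarrow> l < j + t \<Longrightarrow> private_level l"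
    and "path_vertex a j \<in> set c"
  shows "path_vertex a (j + t) \<in> set c"
  using run
proof (induction t)
  case 0 then show ?case using assms(3) by simp
next
  case (Suc t)
  then show ?case using cycle_private_step(2)[OF c, of "j + t" a] by simp
qed

lemma cycle_private_run_down:
  assumes c: "is_cycle verts edges c" and run: "\<And>l. j - t < l \<Longrightarrow> l \<le> j \<Longrightarrow> private_level l"
    and "path_vertex a j \<in> set c"
  shows "path_vertex a (j - t) \<in> set c"
  using run
proof (induction t)
  case 0 then show ?case using assms(3) by simp
next
  case (Suc t)
  show ?case
  proof (cases "t < j")
    case True
    then have "private_level (j - t)" using Suc.prems by simp
    then show ?thesis using Suc cycle_private_step(1)[OF c, of "j - t" a] True
      by (simp add: Suc_diff_Suc)
  next
    case False
    then show ?thesis using Suc by simp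
  qed
qed

lemma cycle_length_two_paths:
  assumes c: "is_cycle verts edges c" and "a \<noteq> b"
    and "I \<subseteq> {..width}" "J \<subseteq> {..width}" "\<And>l. l \<in> J \<Longrightarrow> private_level l"
    and "path_vertex a ` I \<subseteq> set c" "path_vertex b ` J \<subseteq> set c"
  shows "card I + card J \<le> length c"
proof -
  have "inj_on (path_vertex a) I" "inj_on (path_vertex b) J"
    using assms(3,4) inj_on_path_vertex inj_on_subset by blast+
  moreover have "path_vertex a i \<noteq> path_vertex b l" if "i \<in> I" "l \<in> J" for i l
  proof
    assume eq: "path_vertex a i = path_vertex b l"
    then have "i = l" using path_vertex_eq_imp_level_eq that assms(3,4) by blast
    then show False using private_level_determines_path[OF assms(5)[OF that(2)]] eq \<open>a \<noteq> b\<close> by simp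
  qed
  then have "path_vertex a ` I \<inter> path_vertex b ` J = {}" by blast
  moreover have "finite I" "finite J" using assms(3,4) finite_subset by blast+
  ultimately have "card I + card J = card (path_vertex a ` I \<union> path_vertex b ` J)"
    by (simp add: card_Un_disjoint card_image)
  also have "\<dots> \<le> card (set c)" using assms(6,7) by (intro card_mono) auto
  also have "\<dots> = length c" using c unfolding is_cycle_def by (simp add: distinct_card)
  finally show ?thesis .
qed

lemma Source_neighbour:
  assumes "{Source, u} \<in> edges" obtains b where "b \<in> path_index" "u = path_vertex b 1"
  using assms
proof (cases rule: edge_ends)
  case (1 b l)
  then have "l = 0" using path_vertex_eq_imp_level_eq[of _ 0 b l] by simp
  then show ?thesis using 1 that by simp
next
  case (2 b l)
  then show ?thesis using path_vertex_eq_imp_level_eq[of _ 0 b "Suc l"] by simp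
qed

lemma Sink_neighbour:
  assumes "{Sink, u} \<in> edges" obtains b where "b \<in> path_index" "u = path_vertex b (2 * h + k)"
  using assms
proof (cases rule: edge_ends)
  case (1 b l)
  then show ?thesis using path_vertex_eq_imp_level_eq[of _ width b l] by simp
next
  case (2 b l)
  then have "Suc l = width" using path_vertex_eq_imp_level_eq[of _ width b "Suc l"] by simp
  then show ?thesis using 2 that unfolding width_def by simp
qed

lemma cycle_through_Source_long:
  assumes c: "is_cycle verts edges c" and "Source \<in> set c"
  shows "2 * h + 1 \<le> length c"
proof -
  obtain u1 u2 where "u1 \<noteq> u2" "u1 \<in> set c" "u2 \<in> set c" "{Source, u1} \<in> edges" "{Source, u2} \<in> edges"
    using is_cycle_two_neighbours[OF c \<open>Source \<in> set c\<close>] by blast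
  then obtain a b where "a \<noteq> b" "path_vertex a 1 \<in> set c" "path_vertex b 1 \<in> set c"
    using Source_neighbour by metis
  have lower: "path_vertex x ` {1..h} \<subseteq> set c" if "path_vertex x 1 \<in> set c" for x
  proof
    fix v assume "v \<in> path_vertex x ` {1..h}"
    then obtain l where "1 \<le> l" "l \<le> h" "v = path_vertex x (1 + (l - 1))" by auto
    then show "v \<in> set c"
      using cycle_private_run_up[OF c _ that, of "l - 1"] unfolding private_level_def by auto
  qed
  have "{0..h} = insert 0 {1..h}" by auto
  then have "path_vertex a ` {0..h} \<subseteq> set c"
    using lower[OF \<open>path_vertex a 1 \<in> set c\<close>] \<open>Source \<in> set c\<close> by simp
  then have "card {0..h} + card {1..h} \<le> length c"
    using lower[OF \<open>path_vertex b 1 \<in> set c\<close>]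
    by (intro cycle_length_two_paths[OF c \<open>a \<noteq> b\<close>]) (auto simp: private_level_def width_def)
  then show ?thesis by simp
qed

lemma cycle_through_Sink_long:
  assumes c: "is_cycle verts edges c" and "Sink \<in> set c"
  shows "2 * h + 1 \<le> length c"
proof -
  obtain u1 u2 where "u1 \<noteq> u2" "u1 \<in> set c" "u2 \<in> set c" "{Sink, u1} \<in> edges" "{Sink, u2} \<in> edges"
    using is_cycle_two_neighbours[OF c \<open>Sink \<in> set c\<close>] by blast
  then obtain a b where "a \<noteq> b" "path_vertex a (2 * h + k) \<in> set c" "path_vertex b (2 * h + k) \<in> set c"
    using Sink_neighbour by metis
  have upper: "path_vertex x ` {h + k + 1..2 * h + k} \<subseteq> set c"
    if "path_vertex x (2 * h + k) \<in> set c" for x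
  proof
    fix v assume "v \<in> path_vertex x ` {h + k + 1..2 * h + k}"
    then obtain l where l: "h + k < l" "l \<le> 2 * h + k" "v = path_vertex x l"
      by (auto simp: Suc_le_eq)
    then have "v = path_vertex x (2 * h + k - (2 * h + k - l))" by simp
    then show "v \<in> set c" using l
      using cycle_private_run_down[OF c _ that, of "2 * h + k - l"] unfolding private_level_def by auto
  qed
  have "{h + k + 1..width} = insert width {h + k + 1..2 * h + k}" unfolding width_def by auto
  then have "path_vertex a ` {h + k + 1..width} \<subseteq> set c"
    using upper[OF \<open>path_vertex a (2 * h + k) \<in> set c\<close>] \<open>Sink \<in> set c\<close> by simp
  then have "card {h + k + 1..width} + card {h + k + 1..2 * h + k} \<le> length c"
    using upper[OF \<open>path_vertex b (2 * h + k) \<in> set c\<close>]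
    by (intro cycle_length_two_paths[OF c \<open>a \<noteq> b\<close>]) (auto simp: private_level_def width_def)
  then show ?thesis unfolding width_def by simp
qed

definition in_middle :: "vertex \<Rightarrow> bool" where
  "in_middle v \<longleftrightarrow> h < level v \<and> level v \<le> h + k"

lemma middle_vertex_eq:
  assumes "v \<in> verts" "in_middle v"
  shows "v = Middle (middle_label v) (level v - h)" "middle_label v < n"
proof -
  obtain b j where b: "b \<in> path_index" "j \<le> width" "v = path_vertex b j"
    using assms(1) unfolding verts_iff by blast
  then have "h < j" "j \<le> h + k" using assms(2) unfolding in_middle_def by auto
  then show "v = Middle (middle_label v) (level v - h)" "middle_label v < n"
    using b chain_vertex_less[OF b(1), of "j - h - 1"] by (auto simp: path_vertex_middle level_def)
qed

lemma middle_edge_arc: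
  assumes "{u, v} \<in> edges" "in_middle u" "in_middle v"
  shows "level v = Suc (level u) \<and> (\<exists>i. (middle_label u, middle_label v, i) \<in> A) \<or>
    level u = Suc (level v) \<and> (\<exists>i. (middle_label v, middle_label u, i) \<in> A)"
  using assms(1)
proof (cases rule: edge_ends)
  case (1 b l)
  then have "h < l" "Suc l \<le> h + k" using assms(2,3) unfolding in_middle_def by simp_all
  then show ?thesis using 1 path_vertex_middle_arc[OF 1(1)] by auto
next
  case (2 b l)
  then have "h < l" "Suc l \<le> h + k" using assms(2,3) unfolding in_middle_def by simp_all
  then show ?thesis using 2 path_vertex_middle_arc[OF 2(1)] by auto
qed

text \<open>Going on in the same direction would need an arc and its reverse; turning back returns to
  the same level and hence to the same vertex.\<close>

lemma middle_labels_no_backtrack: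
  assumes "{u, v} \<in> edges" "{v, z} \<in> edges" "u \<noteq> z" "u \<in> verts" "z \<in> verts"
    and "in_middle u" "in_middle v" "in_middle z"
  shows "middle_label u \<noteq> middle_label z"
proof
  assume same: "middle_label u = middle_label z"
  have "level u \<noteq> level z"
    using same middle_vertex_eq[OF assms(4,6)] middle_vertex_eq[OF assms(5,8)] \<open>u \<noteq> z\<close> by metis
  then show False
    using middle_edge_arc[OF assms(1,6,7)] middle_edge_arc[OF assms(2,7,8)] same arc_not_reversed
    by auto
qed

lemma middle_cycle_long:
  assumes c: "is_cycle verts edges c" and middle: "\<And>v. v \<in> set c \<Longrightarrow> in_middle v"
  shows "2 * h + 1 \<le> length c"
proof -
  let ?L = "length c"
  define F where "F t = c ! (t mod ?L)" for t
  have L: "3 \<le> ?L" and "distinct c" and "set c \<subseteq> verts"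
    using c unfolding is_cycle_def is_walk_def by auto
  have F_in: "F t \<in> set c" for t
    unfolding F_def using L by (intro nth_mem mod_less_divisor) linarith
  have F_edge: "{F t, F (Suc t)} \<in> edges" for t unfolding F_def by (rule is_cycle_edge_mod[OF c])
  have "\<exists>c'. is_cycle {..<n} (arc_edges A) c' \<and> length c' \<le> ?L"
  proof (rule closed_walk_contains_cycle[of _ ?L "\<lambda>t. middle_label (F t)"])
    show "{u} \<notin> arc_edges A" for u by (rule no_loop_edges)
    show "0 < ?L" "middle_label (F 0) = middle_label (F ?L)" using L unfolding F_def by auto
    show "middle_label (F j) \<in> {..<n}" for j
      using middle_vertex_eq F_in middle \<open>set c \<subseteq> verts\<close> by blast
    show "{middle_label (F j), middle_label (F (Suc j))} \<in> arc_edges A" for j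
      using middle_edge_arc[OF F_edge[of j] middle[OF F_in[of j]] middle[OF F_in[of "Suc j"]]]
      by (metis arc_edgeI insert_commute)
    fix j assume j: "0 < j" "j < ?L"
    have "(j - 1) mod ?L \<noteq> Suc j mod ?L"
      using mod_add_neq_self[of 2 ?L "j - 1"] j L by (simp add: add.commute)
    then have "F (j - 1) \<noteq> F (Suc j)"
      unfolding F_def using \<open>distinct c\<close> L distinct_nth_mod_eq_iff by fastforce
    then show "middle_label (F (j - 1)) \<noteq> middle_label (F (Suc j))"
      using middle_labels_no_backtrack[of "F (j - 1)" "F j" "F (Suc j)"] F_edge[of "j - 1"] F_edge[of j]
        F_in middle \<open>set c \<subseteq> verts\<close> j by auto
  qed
  then show ?thesis using arc_cycles_long by fastforce
qed

lemma cycle_avoiding_ends_in_middle: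
  assumes c: "is_cycle verts edges c" and "Source \<notin> set c" "Sink \<notin> set c" "v \<in> set c"
  shows "in_middle v"
proof -
  have "v \<in> verts" using c assms(4) unfolding is_cycle_def is_walk_def by auto
  then obtain b j where b: "j \<le> width" "v = path_vertex b j" unfolding verts_iff by blast
  have "j \<noteq> 0" "j \<noteq> width" using assms(2-4) b by (metis path_vertex_0 path_vertex_width)+
  moreover have "\<not> j \<le> h"
  proof
    assume "j \<le> h"
    then have "path_vertex b (j - j) \<in> set c"
      using assms(4) b by (intro cycle_private_run_down[OF c]) (auto simp: private_level_def)
    then show False using assms(2) by simp
  qed
  moreover have "\<not> h + k < j"
  proof
    assume "h + k < j"
    then have "path_vertex b (j + (width - j)) \<in> set c"
      using assms(4) b by (intro cycle_private_run_up[OF c]) (auto simp: private_level_def width_def)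
    then show False using assms(3) b by simp
  qed
  ultimately show ?thesis using b unfolding in_middle_def by auto
qed

lemma cycle_long:
  assumes c: "is_cycle verts edges c" shows "2 * h + 1 \<le> length c"
  using cycle_through_Source_long[OF c] cycle_through_Sink_long[OF c]
    middle_cycle_long[OF c] cycle_avoiding_ends_in_middle[OF c] by blast

text \<open>Two paths starting their chains at the same vertex meet on the first middle level, which
  closes a cycle of length \<open>2 h + 2\<close> through the source.\<close>

lemma short_cycle:
  assumes a: "a \<in> path_index" and b: "b \<in> path_index" and "a \<noteq> b" and "snd a = snd b"
  shows "\<exists>c. is_cycle verts edges c \<and> length c \<le> 2 * h + 2"
proof -
  define w where "w t = (if t \<le> h + 1 then path_vertex a t else path_vertex b (2 * h + 2 - t))" for t
  have "path_vertex a (h + 1) = path_vertex b (h + 1)"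
    using k_pos \<open>snd a = snd b\<close> by (simp add: path_vertex_middle chain_vertex_0)
  then have w_upper: "w t = path_vertex b (2 * h + 2 - t)" if "h + 1 \<le> t" for t
    unfolding w_def using that by (cases "t = h + 1") auto
  have "h + 1 < width" unfolding width_def using k_pos by simp
  show ?thesis
  proof (rule closed_walk_contains_cycle[of _ "2 * h + 2" w])
    show "{u} \<notin> edges" for u using simple_graph_layered unfolding simple_graph_def by force
    show "0 < 2 * h + 2" "w 0 = w (2 * h + 2)" unfolding w_def by auto
    show "w j \<in> verts" if "j \<le> 2 * h + 2" for j
      unfolding w_def using that \<open>h + 1 < width\<close> a b by (auto intro: path_vertex_in_verts)
    show "{w j, w (Suc j)} \<in> edges" if "j < 2 * h + 2" for j
    proof (cases "j < h + 1")
      case True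
      then show ?thesis unfolding w_def using \<open>h + 1 < width\<close> by (auto intro: path_edge_in_edges[OF a])
    next
      case False
      then have "w j = path_vertex b (Suc (2 * h + 1 - j))" "w (Suc j) = path_vertex b (2 * h + 1 - j)"
        using w_upper that by (simp_all add: Suc_diff_le)
      then show ?thesis using path_edge_in_edges[OF b, of "2 * h + 1 - j"] False \<open>h + 1 < width\<close>
        by (simp add: insert_commute)
    qed
    show "w (j - 1) \<noteq> w (Suc j)" if "0 < j" "j < 2 * h + 2" for j
    proof (cases "j = h + 1")
      case True
      then have "w (j - 1) = Lower a h" "w (Suc j) = Lower b h"
        using h_pos w_upper unfolding w_def by (auto simp: path_vertex_lower)
      then show ?thesis using \<open>a \<noteq> b\<close> by simp
    next
      case False
      have "level (w (j - 1)) \<noteq> level (w (Suc j))"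
        using False that \<open>h + 1 < width\<close> unfolding w_def by auto
      then show ?thesis by metis
    qed
  qed
qed

lemma girth_layered:
  assumes "n < card path_index"
  shows "\<exists>g. girth verts edges = enat g \<and> 2 * h + 1 \<le> g \<and> g \<le> 2 * h + 2"
proof -
  have "snd ` path_index \<subseteq> {..<n}" unfolding path_index_def chain_starts_def by auto
  then have "\<not> inj_on snd path_index"
    using assms card_image card_mono[of "{..<n}" "snd ` path_index"] by fastforce
  then obtain a b where "a \<in> path_index" "b \<in> path_index" "a \<noteq> b" "snd a = snd b"
    unfolding inj_on_def by blast
  then obtain c1 where c1: "is_cycle verts edges c1" "length c1 \<le> 2 * h + 2"
    using short_cycle by blast
  then obtain c0 where c0: "is_cycle verts edges c0" "girth verts edges = enat (length c0)"
    using girth_attained by blast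
  have "length c0 \<le> length c1" using girth_le_cycle_length[OF c1(1)] c0(2) by simp
  then show ?thesis using c0 c1(2) cycle_long[OF c0(1)] by (intro exI[of _ "length c0"]) auto
qed

lemma card_verts_le: "card verts \<le> 2 + 2 * h * card path_index + k * n"
proof -
  let ?P = "path_index \<times> {1..h}"
  let ?ends = "{Source, Sink}" and ?lower = "case_prod Lower ` ?P" and ?upper = "case_prod Upper ` ?P"
    and ?middle = "case_prod Middle ` ({..<n} \<times> {1..k})"
  have "verts \<subseteq> ?ends \<union> ?lower \<union> ?upper \<union> ?middle"
  proof
    fix v assume "v \<in> verts"
    then obtain a j where a: "a \<in> path_index" "j \<le> width" "v = path_vertex a j"
      unfolding verts_iff by blast
    then show "v \<in> ?ends \<union> ?lower \<union> ?upper \<union> ?middle"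
      using chain_vertex_less[OF a(1), of "j - h - 1"]
      unfolding path_vertex_def width_def by (auto split: if_splits simp: image_iff)
  qed
  then have "card verts \<le> card (?ends \<union> ?lower \<union> ?upper \<union> ?middle)"
    using finite_path_index by (intro card_mono) auto
  also have "\<dots> \<le> card ?ends + card ?lower + card ?upper + card ?middle"
    by (meson add_le_mono card_Un_le order_refl order_trans)
  also have "\<dots> \<le> 2 + card ?P + card ?P + card ({..<n} \<times> {1..k})"
    by (intro add_le_mono card_image_le) (auto simp: card_insert_le_m1 finite_path_index)
  finally show ?thesis by (simp add: card_cartesian_product algebra_simps)
qed

lemma card_verts_ge: "2 * h * card path_index \<le> card verts"
proof -
  let ?P = "path_index \<times> {1..h}"
  have "case_prod Lower ` ?P \<union> case_prod Upper ` ?P \<subseteq> verts"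
  proof
    fix v assume "v \<in> case_prod Lower ` ?P \<union> case_prod Upper ` ?P"
    then obtain a j where "a \<in> path_index" "1 \<le> j" "j \<le> h" "v = Lower a j \<or> v = Upper a j" by auto
    moreover have "j \<le> width" "h + k + j \<le> width" using \<open>j \<le> h\<close> unfolding width_def by auto
    ultimately show "v \<in> verts"
      using path_vertex_in_verts[of a j] path_vertex_in_verts[of a "h + k + j"]
      by (auto simp: path_vertex_lower path_vertex_upper)
  qed
  moreover have "finite verts" using simple_graph_layered unfolding simple_graph_def by simp
  ultimately have "card (case_prod Lower ` ?P \<union> case_prod Upper ` ?P) \<le> card verts"
    by (rule card_mono[rotated])
  moreover have "card (case_prod Lower ` ?P \<union> case_prod Upper ` ?P) = 2 * h * card path_index"
    using finite_path_index
    by (subst card_Un_disjoint) (auto simp: card_image inj_on_def card_cartesian_product)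
  ultimately show ?thesis by simp
qed

lemma card_path_index_bounds:
  assumes few_ends: "\<And>i. i < d \<Longrightarrow> card ({..<n} - arc_tails A i) \<le> \<beta>"
    and "2 * (k - 1) * \<beta> \<le> n"
  shows "d * n \<le> 2 * card path_index" "card path_index \<le> d * n"
proof -
  have "path_index = Sigma {..<d} (\<lambda>i. chain_starts n A i (k - 1))" unfolding path_index_def by auto
  then have card: "card path_index = (\<Sum>i<d. card (chain_starts n A i (k - 1)))"
    by (simp add: card_SigmaI chain_starts_def)
  have "n \<le> 2 * card (chain_starts n A i (k - 1))" if "i < d" for i
  proof -
    have "chain_starts n A i (k - 1) \<subseteq> {..<n}" unfolding chain_starts_def by auto
    then have "n - card (chain_starts n A i (k - 1)) = card ({..<n} - chain_starts n A i (k - 1))"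
      by (simp add: card_Diff_subset finite_subset)
    also have "\<dots> \<le> (k - 1) * \<beta>" using card_not_chain_starts[OF few_ends[OF that]] .
    finally show ?thesis using assms(2) by linarith
  qed
  then have "(\<Sum>i<d. n) \<le> (\<Sum>i<d. 2 * card (chain_starts n A i (k - 1)))" by (intro sum_mono) auto
  then show "d * n \<le> 2 * card path_index" unfolding card by (simp add: sum_distrib_left)
  have "path_index \<subseteq> {..<d} \<times> {..<n}" unfolding path_index_def chain_starts_def by auto
  then show "card path_index \<le> d * n"
    using card_mono[of "{..<d} \<times> {..<n}"] by (simp add: card_cartesian_product)
qed

end

section \<open>Choice of the parameters\<close>

lemma layered_size_arith:
  fixes h n N m :: nat
  assumes h: "1 \<le> h" and n: "n = (16 * h + 4) * 625 ^ h" and N: "6 * n \<le> N" "N \<le> 12 * n"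
    and m: "2 * h * N \<le> m" "m \<le> 2 + 2 * h * N + (8 * h + 2) * n"
  shows "3 * m \<le> N * (10 * h + 3)" "N * (10 * h + 3) \<le> 7 * m" "2 ^ (9 * h) \<le> m" "m \<le> 2 ^ (23 * h)"
proof -
  have "1 \<le> n" "N \<le> h * N" using n h by simp_all
  have "3 * ((8 * h + 2) * n) = (4 * h + 1) * (6 * n)" by (simp add: algebra_simps)
  also have "\<dots> \<le> (4 * h + 1) * N" using N(1) by (rule mult_le_mono2)
  finally show "3 * m \<le> N * (10 * h + 3)" using m(2) N(1) \<open>1 \<le> n\<close> by (simp add: algebra_simps)
  have "N * (10 * h + 3) = 10 * (h * N) + 3 * N" "2 * h * N = 2 * (h * N)"
    by (simp_all add: algebra_simps)
  then show "N * (10 * h + 3) \<le> 7 * m" using m(1) \<open>N \<le> h * N\<close> by linarith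
  have "(2::nat) ^ (9 * h) = 512 ^ h" by (simp add: power_mult)
  also have "\<dots> \<le> 625 ^ h" by (simp add: power_mono)
  also have "\<dots> \<le> n" unfolding n by simp
  finally show "2 ^ (9 * h) \<le> m" using N(1) m(1) \<open>N \<le> h * N\<close> by linarith
  have "h \<le> 2 ^ h" "(2::nat) ^ (h + 6) = 64 * 2 ^ h" "(2::nat) ^ (h + 5) = 32 * 2 ^ h"
    by (simp_all add: power_add)
  then have "32 * h + 4 \<le> 2 ^ (h + 6)" "16 * h + 4 \<le> 2 ^ (h + 5)" using h by linarith+
  moreover have "(2::nat) ^ (h + 6) \<le> 2 ^ (7 * h)" "(2::nat) ^ (h + 5) \<le> 2 ^ (6 * h)"
    using h by (intro power_increasing; simp)+
  ultimately have "32 * h + 4 \<le> 2 ^ (7 * h)" "16 * h + 4 \<le> (2::nat) ^ (6 * h)" by linarith+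
  have "m \<le> (32 * h + 4) * n"
  proof -
    have "h * N \<le> h * (12 * n)" using N(2) by (rule mult_le_mono2)
    moreover have "2 * h * N = 2 * (h * N)" "(8 * h + 2) * n = 8 * (h * n) + 2 * n"
      "h * (12 * n) = 12 * (h * n)" "(32 * h + 4) * n = 32 * (h * n) + 4 * n"
      by (simp_all add: algebra_simps)
    ultimately show ?thesis using m(2) \<open>1 \<le> n\<close> by linarith
  qed
  also have "\<dots> \<le> 2 ^ (7 * h) * 2 ^ (6 * h) * 625 ^ h" using \<open>32 * h + 4 \<le> 2 ^ (7 * h)\<close>
    \<open>16 * h + 4 \<le> 2 ^ (6 * h)\<close> unfolding n by (simp add: mult_le_mono mult.assoc)
  also have "(625::nat) ^ h \<le> 2 ^ (10 * h)" by (simp add: power_mult power_mono)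
  finally show "m \<le> 2 ^ (23 * h)"
    by (simp add: power_add[symmetric])
qed

text \<open>Twelve colours, chains of \<open>k = 8 h + 2\<close> vertices and \<open>n = (16 h + 4) 625\<^sup>h\<close> make at least half
  of all vertices chain starts in every colour, so there are more paths than vertices of the arc
  system, and the private segments carry enough edges.\<close>

lemma layered_graph_instance:
  assumes h: "1 \<le> h"
  shows "\<exists>m E g. 2 ^ (9 * h) \<le> m \<and> m \<le> 2 ^ (23 * h) \<and>
    (\<exists>s t. base_graph {..<m} E s t (10 * h + 3)) \<and> 3 * m \<le> card E \<and> card E \<le> 7 * m \<and>
    girth {..<m} E = enat g \<and> 2 * h + 1 \<le> g \<and> g \<le> 2 * h + 2"
proof -
  define k where "k = 8 * h + 2"
  define n where "n = (16 * h + 4) * 625 ^ h"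
  obtain A where A: "arc_system n 12 (2 * h + 1) A"
    and few_ends: "\<And>i. i < 12 \<Longrightarrow> card ({..<n} - arc_tails A i) \<le> 25 ^ (2 * h - 1)"
    using maximal_arc_system[of "2 * h + 1" n 12] h by auto
  interpret L: layered_graph n 12 h A k
    by (rule layered_graph.intro[OF A]) (use h in \<open>simp add: layered_graph_axioms_def k_def\<close>)
  have "(25::nat) ^ (2 * h - 1) \<le> 25 ^ (2 * h)" by (intro power_increasing) auto
  then have "(25::nat) ^ (2 * h - 1) \<le> 625 ^ h" by (simp add: power_mult)
  then have "card ({..<n} - arc_tails A i) \<le> 625 ^ h" if "i < 12" for i
    using few_ends[OF that] by linarith
  moreover have "2 * (k - 1) * 625 ^ h \<le> n" unfolding n_def k_def by (simp add: algebra_simps)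
  ultimately have "12 * n \<le> 2 * card L.path_index" "card L.path_index \<le> 12 * n"
    using L.card_path_index_bounds by blast+
  moreover have "1 \<le> n" unfolding n_def by simp
  ultimately have "n < card L.path_index" by auto
  then obtain a0 where "a0 \<in> L.path_index" by (metis card.empty ex_in_conv not_less0)
  obtain E s t where E: "base_graph {..<card L.verts} E s t L.width" "card E = card L.edges"
    "girth {..<card L.verts} E = girth L.verts L.edges"
    by (rule base_graph_relabel_lessThan[OF L.base_graph_layered[OF \<open>a0 \<in> L.path_index\<close>]])
  obtain g where g: "girth L.verts L.edges = enat g" "2 * h + 1 \<le> g" "g \<le> 2 * h + 2"
    using L.girth_layered[OF \<open>n < card L.path_index\<close>] by blast
  have width: "L.width = 10 * h + 3" unfolding L.width_def by (simp add: k_def)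
  have "3 * card L.verts \<le> card E" "card E \<le> 7 * card L.verts"
    "2 ^ (9 * h) \<le> card L.verts" "card L.verts \<le> 2 ^ (23 * h)"
    using layered_size_arith[OF h n_def _ _ L.card_verts_ge] L.card_verts_le
      \<open>12 * n \<le> 2 * card L.path_index\<close>
      \<open>card L.path_index \<le> 12 * n\<close> E(2) L.card_edges width unfolding k_def by auto
  then show ?thesis using E g width by (intro exI[of _ "card L.verts"] exI[of _ E] exI[of _ g]) auto
qed

lemma ln_between_powers_of_two:
  fixes m p q :: nat
  assumes "2 ^ p \<le> m" "m \<le> 2 ^ q"
  shows "2 / 3 * p \<le> ln m" "ln m \<le> q"
proof -
  have pow: "(2::real) ^ p \<le> m" "real m \<le> 2 ^ q"
    using assms by (metis of_nat_le_iff of_nat_numeral of_nat_power)+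
  then have "0 < real m" by (meson less_le_trans zero_less_numeral zero_less_power)
  have "ln (2::real) \<le> 1" using ln_le_minus_one[of 2] by simp
  have "2 / 3 * p \<le> p * ln (2::real)"
    using mult_left_mono[OF ln2_ge_two_thirds, of "real p"] by (simp add: mult.commute)
  also have "\<dots> = ln (2 ^ p)" by (simp add: ln_realpow)
  also have "\<dots> \<le> ln m" using pow(1) by (rule ln_mono) simp
  finally show "2 / 3 * p \<le> ln m" .
  have "ln m \<le> ln ((2::real) ^ q)" using pow(2) by (rule ln_mono) fact
  also have "\<dots> = q * ln 2" by (simp add: ln_realpow)
  also have "\<dots> \<le> q" using \<open>ln 2 \<le> 1\<close> by (simp add: mult_left_le)
  finally show "ln m \<le> q" .
qed

lemma infinite_family_of_unbounded:
  fixes P :: "nat \<Rightarrow> 'a \<Rightarrow> bool"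
  assumes "\<And>h. \<exists>m\<ge>h. \<exists>x. P m x"
  shows "\<exists>M. infinite M \<and> (\<exists>B. \<forall>m\<in>M. P m (B m))"
proof (intro exI conjI)
  show "infinite {m. \<exists>x. P m x}" using assms by (simp add: infinite_nat_iff_unbounded_le)
  show "\<forall>m\<in>{m. \<exists>x. P m x}. P m (SOME x. P m x)" by (auto intro: someI)
qed

lemma log_family_member:
  "\<exists>m\<ge>h. \<exists>E.
    (\<exists>s t phi. base_graph {..<m} E s t phi \<and>
      1 / 23 * ln (real m) \<le> real phi \<and> real phi \<le> 10 * ln (real m)) \<and>
    real (card E) \<le> 10 * real m \<and> card E \<ge> 3 * m \<and>
    (\<exists>g::nat. girth {..<m} E = enat g \<and>
      1 / 23 * ln (real m) \<le> real g \<and> real g \<le> 10 * ln (real m))"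
proof -
  define h' where "h' = max 1 h"
  then have "1 \<le> h'" "h \<le> h'" by simp_all
  then obtain m E g where m: "2 ^ (9 * h') \<le> m" "m \<le> 2 ^ (23 * h')"
    and E: "\<exists>s t. base_graph {..<m} E s t (10 * h' + 3)" "3 * m \<le> card E" "card E \<le> 7 * m"
    and g: "girth {..<m} E = enat g" "2 * h' + 1 \<le> g" "g \<le> 2 * h' + 2"
    using layered_graph_instance by blast
  obtain s t where st: "base_graph {..<m} E s t (10 * h' + 3)" using E(1) by blast
  have ln: "6 * h' \<le> ln m" "ln m \<le> 23 * h'" using ln_between_powers_of_two[OF m] by simp_all
  have "h \<le> m" using \<open>h \<le> h'\<close> m(1) self_le_ge2_pow[of 2 "9 * h'"] by linarith
  moreover have "1 / 23 * ln m \<le> real (10 * h' + 3)" "real (10 * h' + 3) \<le> 10 * ln m"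
    using ln \<open>1 \<le> h'\<close> by simp_all
  moreover have "real (card E) \<le> 10 * real m" using E(3) by simp
  moreover have "1 / 23 * ln m \<le> real g" "real g \<le> 10 * ln m" using ln g \<open>1 \<le> h'\<close> by simp_all
  ultimately show ?thesis using st E(2) g(1) by blast
qed

theorem lemma5p4:
  shows "\<exists>c::real. c > 0 \<and> (\<exists>C::real. C > 0 \<and>
    (\<exists>M::nat set. infinite M \<and>
      (\<exists>B :: nat \<Rightarrow> nat set set. \<forall>m\<in>M.
         (\<exists>s t phi. base_graph {..<m} (B m) s t phi \<and>
            c * ln (real m) \<le> real phi \<and> real phi \<le> C * ln (real m)) \<and>
         real (card (B m)) \<le> C * real m \<and>
         card (B m) \<ge> 3 * m \<and>
         (\<exists>g::nat. girth {..<m} (B m) = enat g \<and>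
            c * ln (real m) \<le> real g \<and> real g \<le> C * ln (real m)))))"
  by (rule exI[of _ "1 / 23"], rule conjI, simp, rule exI[of _ 10], rule conjI, simp)
    (rule infinite_family_of_unbounded[OF log_family_member])

end
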